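(* Let $\Bbbk$ be a commutative ring. The coinduction functor $Q:\mathrm{FI}\text{-}\mathrm{Mod}\to\mathrm{FI}\text{-}\mathrm{Mod}$ is isomorphic to the functor $Q':V\mapsto Q'V$.
   Context: $\mathrm{FI}$ is the category whose objects are finite sets and whose morphisms are injective maps. An $\mathrm{FI}$-module is a functor from $\mathrm{FI}$ to the category of $\Bbbk$-modules; homomorphisms are natural transformations; $\mathrm{FI}\text{-}\mathrm{Mod}$ denotes this category. For an $\mathrm{FI}$-module $V$ and a finite set $X$ write $V_X=V(X)$, and for an injection $f$ write $f_*=V(f)$. For a finite set $X$, $M(X)$ is the $\mathrm{FI}$-module with $M(X)_Y=\Bbbk\,\mathrm{FI}(X,Y)$ (free $\Bbbk$-module on injections $X\to Y$), with structure maps given by postcomposition; for $f\in\mathrm{FI}(X,Y)$ let $\rho_f:M(Y)\to M(X)$, $g\mapsto g\circ f$. Fix a one-element set $\{\star\}$; the shift functor is $SV=V\circ\sigma$ where $\sigma(X)=X\sqcup\{\star\}$, $\sigma(f)=f\sqcup\mathrm{id}_{\{\star\}}$. The coinduction functor is $Q=S^\dagger$, defined by $(QV)_X=\mathrm{Hom}_{\mathrm{FI}\text{-}\mathrm{Mod}}(S(M(X)),V)$, with $f_*(\phi)=\phi\circ S(\rho_f)$ for $f\in\mathrm{FI}(X,Y)$, and acting on homomorphisms $V\to W$ by postcomposition. The negative-one shift functor is defined by $(\widetilde{S}_{-1}V)_X=\bigoplus_{x\in X}V_{X\setminus\{x\}}$, and for an injection $f:X\to Y$, $f_*:(\widetilde{S}_{-1}V)_X\to(\widetilde{S}_{-1}V)_Y$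 restricts on the summand $V_{X\setminus\{x\}}$ to $(f|_{X\setminus\{x\}})_*:V_{X\setminus\{x\}}\to V_{Y\setminus\{f(x)\}}$. For an injection $f:X\to Y$ and $y\in Y\setminus f(X)$, let $\partial_yf:X\to Y\setminus\{y\}$ be $f$ with codomain restricted, and define $\partial f_*:V_X\to(\widetilde{S}_{-1}V)_Y$ by $v\mapsto\sum_{y\in Y\setminus f(X)}(\partial_yf)_*(v)$, where $(\partial_yf)_*(v)$ lies in the summand $V_{Y\setminus\{y\}}$. The $\mathrm{FI}$-module $Q'V$ is given by $(Q'V)_X=V_X\oplus(\widetilde{S}_{-1}V)_X$, and for an injection $f:X\to Y$, $f_*:(Q'V)_X\to(Q'V)_Y$ is given in column notation by the matrix $\begin{pmatrix} f_* & 0\\ \partial f_* & f_*\end{pmatrix}$, i.e. $(v,w)\mapsto (f_*v,\ \partial f_*(v)+f_*w)$; $Q'$ acts on homomorphisms componentwise. *)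

theory Defs
  imports "HOL-Algebra.Module" "HOL-Library.FuncSet"
begin

text \<open>Objects of FI are finite sets; we use finite subsets of nat (equivalent category).
  Morphisms X -> Y are injections, represented as extensional functions on X.\<close>

definition FIm :: "nat set \<Rightarrow> nat set \<Rightarrow> (nat \<Rightarrow> nat) set" where
  "FIm X Y = {f \<in> X \<rightarrow>\<^sub>E Y. inj_on f X}"

text \<open>sigma(X) = X disjoint-union {star}, realised as {0} union Suc`X with star = 0.\<close>
definition sig :: "nat set \<Rightarrow> nat set" where
  "sig X = insert 0 (Suc ` X)"

definition sigf :: "nat set \<Rightarrow> (nat \<Rightarrow> nat) \<Rightarrow> (nat \<Rightarrow> nat)" where
  "sigf X f = (\<lambda>n\<in>sig X. if n = 0 then 0 else Suc (f (n - 1)))"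

definition mk_module :: "'v set \<Rightarrow> 'v \<Rightarrow> ('v \<Rightarrow> 'v \<Rightarrow> 'v) \<Rightarrow> ('k \<Rightarrow> 'v \<Rightarrow> 'v) \<Rightarrow> ('k, 'v) module" where
  "mk_module C z a s = \<lparr>carrier = C, monoid.mult = undefined, one = undefined,
      zero = z, add = a, smult = s\<rparr>"

definition module_hom :: "('k, 'm) ring_scheme \<Rightarrow> ('k, 'v) module \<Rightarrow> ('k, 'w) module \<Rightarrow> ('v \<Rightarrow> 'w) set" where
  "module_hom R M N = {f. f \<in> carrier M \<rightarrow> carrier N
      \<and> (\<forall>x\<in>carrier M. \<forall>y\<in>carrier M. f (x \<oplus>\<^bsub>M\<^esub> y) = f x \<oplus>\<^bsub>N\<^esub> f y)
      \<and> (\<forall>a\<in>carrier R. \<forall>x\<in>carrier M. f (a \<odot>\<^bsub>M\<^esub> x) = a \<odot>\<^bsub>N\<^esub> f x)}"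

record ('k, 'v) fimod =
  FMod :: "nat set \<Rightarrow> ('k, 'v) module"
  FAct :: "nat set \<Rightarrow> nat set \<Rightarrow> (nat \<Rightarrow> nat) \<Rightarrow> 'v \<Rightarrow> 'v"

definition is_FI_module :: "('k, 'm) ring_scheme \<Rightarrow> ('k, 'v) fimod \<Rightarrow> bool" where
  "is_FI_module R V \<longleftrightarrow>
     (\<forall>X. finite X \<longrightarrow> module R (FMod V X))
   \<and> (\<forall>X Y f. finite X \<longrightarrow> finite Y \<longrightarrow> f \<in> FIm X Y \<longrightarrow>
        FAct V X Y f \<in> module_hom R (FMod V X) (FMod V Y))
   \<and> (\<forall>X. finite X \<longrightarrow> (\<forall>v\<in>carrier (FMod V X). FAct V X X (restrict id X) v = v))
   \<and> (\<forall>X Y Z f g. finite X \<longrightarrow> finite Y \<longrightarrow> finite Z \<longrightarrow> f \<in> FIm X Y \<longrightarrow> g \<in> FIm Y Z \<longrightarrow>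
        (\<forall>v\<in>carrier (FMod V X).
           FAct V X Z (compose X g f) v = FAct V Y Z g (FAct V X Y f v)))"

definition FIHom :: "('k, 'm) ring_scheme \<Rightarrow> ('k, 'v) fimod \<Rightarrow> ('k, 'w) fimod
    \<Rightarrow> (nat set \<Rightarrow> 'v \<Rightarrow> 'w) set" where
  "FIHom R V W = {\<alpha>.
      (\<forall>X. finite X \<longrightarrow> \<alpha> X \<in> module_hom R (FMod V X) (FMod W X))
    \<and> (\<forall>X Y f. finite X \<longrightarrow> finite Y \<longrightarrow> f \<in> FIm X Y \<longrightarrow>
         (\<forall>v\<in>carrier (FMod V X). \<alpha> Y (FAct V X Y f v) = FAct W X Y f (\<alpha> X v)))}"

text \<open>Extensional representatives of homomorphisms (so that Hom(V,W) is a set of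
  uniquely represented elements).\<close>
definition FIHomE :: "('k, 'm) ring_scheme \<Rightarrow> ('k, 'v) fimod \<Rightarrow> ('k, 'w) fimod
    \<Rightarrow> (nat set \<Rightarrow> 'v \<Rightarrow> 'w) set" where
  "FIHomE R V W = {\<alpha> \<in> FIHom R V W. \<alpha> \<in> extensional {X. finite X}
      \<and> (\<forall>X. finite X \<longrightarrow> \<alpha> X \<in> extensional (carrier (FMod V X)))}"

definition FIIso :: "('k, 'm) ring_scheme \<Rightarrow> ('k, 'v) fimod \<Rightarrow> ('k, 'w) fimod
    \<Rightarrow> (nat set \<Rightarrow> 'v \<Rightarrow> 'w) \<Rightarrow> bool" where
  "FIIso R V W \<eta> \<longleftrightarrow> \<eta> \<in> FIHom R V W
     \<and> (\<forall>X. finite X \<longrightarrow> bij_betw (\<eta> X) (carrier (FMod V X)) (carrier (FMod W X)))"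

definition free_mod :: "('k, 'm) ring_scheme \<Rightarrow> 'i set \<Rightarrow> ('k, 'i \<Rightarrow> 'k) module" where
  "free_mod R I = mk_module (I \<rightarrow>\<^sub>E carrier R) (\<lambda>i\<in>I. \<zero>\<^bsub>R\<^esub>)
      (\<lambda>c d. \<lambda>i\<in>I. c i \<oplus>\<^bsub>R\<^esub> d i) (\<lambda>a c. \<lambda>i\<in>I. a \<otimes>\<^bsub>R\<^esub> c i)"

text \<open>M(X): M(X)_Y = k FI(X,Y), structure maps given by postcomposition
  (extended linearly).\<close>
definition Mfree :: "('k, 'm) ring_scheme \<Rightarrow> nat set \<Rightarrow> ('k, (nat \<Rightarrow> nat) \<Rightarrow> 'k) fimod" where
  "Mfree R X = \<lparr>FMod = (\<lambda>Y. free_mod R (FIm X Y)),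
     FAct = (\<lambda>Y Z g c. \<lambda>h\<in>FIm X Z.
        \<Oplus>\<^bsub>R\<^esub>h'\<in>{h' \<in> FIm X Y. compose X g h' = h}. c h')\<rparr>"

text \<open>rho_f : M(Y) -> M(X) for f in FI(X,Y), component at Z: g |-> g o f.\<close>
definition rho :: "('k, 'm) ring_scheme \<Rightarrow> nat set \<Rightarrow> nat set \<Rightarrow> (nat \<Rightarrow> nat) \<Rightarrow> nat set
    \<Rightarrow> ((nat \<Rightarrow> nat) \<Rightarrow> 'k) \<Rightarrow> ((nat \<Rightarrow> nat) \<Rightarrow> 'k)" where
  "rho R X Y f Z c = (\<lambda>h\<in>FIm X Z. \<Oplus>\<^bsub>R\<^esub>g\<in>{g \<in> FIm Y Z. compose X g f = h}. c g)"

definition Shift :: "('k, 'v) fimod \<Rightarrow> ('k, 'v) fimod" where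
  "Shift V = \<lparr>FMod = (\<lambda>Y. FMod V (sig Y)),
              FAct = (\<lambda>Y Z f. FAct V (sig Y) (sig Z) (sigf Y f))\<rparr>"

definition Qmod :: "('k, 'm) ring_scheme \<Rightarrow> ('k, 'v) fimod \<Rightarrow> nat set
    \<Rightarrow> ('k, nat set \<Rightarrow> ((nat \<Rightarrow> nat) \<Rightarrow> 'k) \<Rightarrow> 'v) module" where
  "Qmod R V X = mk_module (FIHomE R (Shift (Mfree R X)) V)
     (\<lambda>Z\<in>{Z. finite Z}. \<lambda>c\<in>carrier (FMod (Shift (Mfree R X)) Z). \<zero>\<^bsub>FMod V Z\<^esub>)
     (\<lambda>\<phi> \<psi>. \<lambda>Z\<in>{Z. finite Z}. \<lambda>c\<in>carrier (FMod (Shift (Mfree R X)) Z).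
          \<phi> Z c \<oplus>\<^bsub>FMod V Z\<^esub> \<psi> Z c)
     (\<lambda>a \<phi>. \<lambda>Z\<in>{Z. finite Z}. \<lambda>c\<in>carrier (FMod (Shift (Mfree R X)) Z).
          a \<odot>\<^bsub>FMod V Z\<^esub> \<phi> Z c)"

text \<open>f_* phi = phi o S(rho_f).\<close>
definition Q :: "('k, 'm) ring_scheme \<Rightarrow> ('k, 'v) fimod
    \<Rightarrow> ('k, nat set \<Rightarrow> ((nat \<Rightarrow> nat) \<Rightarrow> 'k) \<Rightarrow> 'v) fimod" where
  "Q R V = \<lparr>FMod = Qmod R V,
     FAct = (\<lambda>X Y f \<phi>. \<lambda>Z\<in>{Z. finite Z}. \<lambda>c\<in>carrier (FMod (Shift (Mfree R Y)) Z).
        \<phi> Z (rho R X Y f (sig Z) c))\<rparr>"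

definition Qmap :: "('k, 'm) ring_scheme \<Rightarrow> (nat set \<Rightarrow> 'v \<Rightarrow> 'w) \<Rightarrow> nat set
    \<Rightarrow> (nat set \<Rightarrow> ((nat \<Rightarrow> nat) \<Rightarrow> 'k) \<Rightarrow> 'v) \<Rightarrow> (nat set \<Rightarrow> ((nat \<Rightarrow> nat) \<Rightarrow> 'k) \<Rightarrow> 'w)" where
  "Qmap R \<alpha> X \<phi> = (\<lambda>Z\<in>{Z. finite Z}. \<lambda>c\<in>carrier (FMod (Shift (Mfree R X)) Z). \<alpha> Z (\<phi> Z c))"

text \<open>(Q'V)_X = V_X (+) (bigoplus over x in X of V_{X - x}); the finite direct sum is
  represented by extensional functions on X.\<close>
definition Q'mod :: "('k, 'v) fimod \<Rightarrow> nat set \<Rightarrow> ('k, 'v \<times> (nat \<Rightarrow> 'v)) module" where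
  "Q'mod V X = mk_module
     (carrier (FMod V X) \<times> (\<Pi>\<^sub>E x\<in>X. carrier (FMod V (X - {x}))))
     (\<zero>\<^bsub>FMod V X\<^esub>, \<lambda>x\<in>X. \<zero>\<^bsub>FMod V (X - {x})\<^esub>)
     (\<lambda>(v, w) (v', w'). (v \<oplus>\<^bsub>FMod V X\<^esub> v', \<lambda>x\<in>X. w x \<oplus>\<^bsub>FMod V (X - {x})\<^esub> w' x))
     (\<lambda>a (v, w). (a \<odot>\<^bsub>FMod V X\<^esub> v, \<lambda>x\<in>X. a \<odot>\<^bsub>FMod V (X - {x})\<^esub> w x))"

text \<open>f_*(v,w) = (f_* v, dF_*(v) + f_* w).  On the summand V_{X - x} the map f_* is
  (f restricted to X - x)_* into the summand V_{Y - f x}; the component of dF_*(v) at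
  y not in f(X) is (d_y f)_* v, where d_y f is f with codomain Y - y.\<close>
definition Q' :: "('k, 'v) fimod \<Rightarrow> ('k, 'v \<times> (nat \<Rightarrow> 'v)) fimod" where
  "Q' V = \<lparr>FMod = Q'mod V,
     FAct = (\<lambda>X Y f (v, w).
        (FAct V X Y f v,
         \<lambda>y\<in>Y. (if y \<in> f ` X then
                   FAct V (X - {the_inv_into X f y}) (Y - {y})
                        (restrict f (X - {the_inv_into X f y})) (w (the_inv_into X f y))
                 else FAct V X (Y - {y}) f v)))\<rparr>"

definition Q'map :: "(nat set \<Rightarrow> 'v \<Rightarrow> 'w) \<Rightarrow> nat set \<Rightarrow> 'v \<times> (nat \<Rightarrow> 'v) \<Rightarrow> 'w \<times> (nat \<Rightarrow> 'w)" where
  "Q'map \<alpha> X = (\<lambda>(v, w). (\<alpha> X v, \<lambda>x\<in>X. \<alpha> (X - {x}) (w x)))"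

end

theory Submission
  imports Defs
begin

text \<open>The FI-module \<open>S(M(X))\<close> is free: \<open>S(M(X))\<^sub>Z\<close> has basis the injections
  \<open>h : X \<rightarrow> \<sigma>Z\<close>.  Such an \<open>h\<close> either misses \<open>\<star>\<close>, and then it is \<open>\<sigma>(h') \<circ> \<iota>\<^sub>X\<close> for the inclusion
  \<open>\<iota>\<^sub>X : X \<rightarrow> \<sigma>X\<close>, or it sends exactly one \<open>x\<close> to \<open>\<star>\<close>, and then it is \<open>\<sigma>(h') \<circ> \<tau>\<^sub>x\<close> for the map
  \<open>\<tau>\<^sub>x : X \<rightarrow> \<sigma>(X - {x})\<close> collapsing \<open>x\<close> to \<open>\<star>\<close>.  Hence a homomorphism \<open>\<phi> : S(M(X)) \<rightarrow> V\<close> is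
  determined by \<open>\<phi>(\<iota>\<^sub>X) \<in> V\<^sub>X\<close> and the \<open>\<phi>(\<tau>\<^sub>x) \<in> V\<^bsub>X - {x}\<^esub>\<close>, and these values can be
  prescribed freely; evaluation at these generators is the isomorphism \<open>\<eta> : (QV)\<^sub>X \<cong> (Q'V)\<^sub>X\<close>,
  natural in \<open>V\<close> because \<open>Q\<close> acts by postcomposition.  For \<open>f : X \<rightarrow> Y\<close>, the generator \<open>\<iota>\<^sub>Y \<circ> f\<close>
  factors through \<open>\<iota>\<^sub>X\<close>, while \<open>\<tau>\<^sub>y \<circ> f\<close> factors through \<open>\<tau>\<^sub>x\<close> if \<open>y = f x\<close> and through \<open>\<iota>\<^sub>X\<close> if
  \<open>y \<notin> f(X)\<close>; this is exactly the matrix defining the action of \<open>Q'\<close>, so \<open>\<eta>\<close> commutes with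
  the actions, and functoriality of \<open>Q\<close> is inherited from that of \<open>Q'\<close>.\<close>

section \<open>Module constructions\<close>

lemma mk_module_simps [simp]:
  "carrier (mk_module C z a s) = C" "zero (mk_module C z a s) = z"
  "add (mk_module C z a s) = a" "smult (mk_module C z a s) = s"
  by (simp_all add: mk_module_def)

lemma module_add_laws:
  assumes "module R M"
  shows module_add_closed: "\<And>x y. x \<in> carrier M \<Longrightarrow> y \<in> carrier M \<Longrightarrow> x \<oplus>\<^bsub>M\<^esub> y \<in> carrier M"
    and module_zero_closed: "\<zero>\<^bsub>M\<^esub> \<in> carrier M"
    and module_neg_closed: "\<And>x. x \<in> carrier M \<Longrightarrow> \<ominus>\<^bsub>M\<^esub> x \<in> carrier M"
    and module_add_assoc: "\<And>x y z. x \<in> carrier M \<Longrightarrow> y \<in> carrier M \<Longrightarrow> z \<in> carrier M \<Longrightarrow>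
          x \<oplus>\<^bsub>M\<^esub> y \<oplus>\<^bsub>M\<^esub> z = x \<oplus>\<^bsub>M\<^esub> (y \<oplus>\<^bsub>M\<^esub> z)"
    and module_add_comm: "\<And>x y. x \<in> carrier M \<Longrightarrow> y \<in> carrier M \<Longrightarrow> x \<oplus>\<^bsub>M\<^esub> y = y \<oplus>\<^bsub>M\<^esub> x"
    and module_zero_add: "\<And>x. x \<in> carrier M \<Longrightarrow> \<zero>\<^bsub>M\<^esub> \<oplus>\<^bsub>M\<^esub> x = x"
    and module_neg_add: "\<And>x. x \<in> carrier M \<Longrightarrow> \<ominus>\<^bsub>M\<^esub> x \<oplus>\<^bsub>M\<^esub> x = \<zero>\<^bsub>M\<^esub>"
proof -
  interpret module R M by fact
  show "\<And>x y. x \<in> carrier M \<Longrightarrow> y \<in> carrier M \<Longrightarrow> x \<oplus>\<^bsub>M\<^esub> y \<in> carrier M"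
    and "\<zero>\<^bsub>M\<^esub> \<in> carrier M" and "\<And>x. x \<in> carrier M \<Longrightarrow> \<ominus>\<^bsub>M\<^esub> x \<in> carrier M"
    and "\<And>x. x \<in> carrier M \<Longrightarrow> \<zero>\<^bsub>M\<^esub> \<oplus>\<^bsub>M\<^esub> x = x"
    and "\<And>x. x \<in> carrier M \<Longrightarrow> \<ominus>\<^bsub>M\<^esub> x \<oplus>\<^bsub>M\<^esub> x = \<zero>\<^bsub>M\<^esub>"
    by (simp_all add: l_neg)
  show "\<And>x y z. x \<in> carrier M \<Longrightarrow> y \<in> carrier M \<Longrightarrow> z \<in> carrier M \<Longrightarrow>
      x \<oplus>\<^bsub>M\<^esub> y \<oplus>\<^bsub>M\<^esub> z = x \<oplus>\<^bsub>M\<^esub> (y \<oplus>\<^bsub>M\<^esub> z)"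
    by (rule a_assoc)
  show "\<And>x y. x \<in> carrier M \<Longrightarrow> y \<in> carrier M \<Longrightarrow> x \<oplus>\<^bsub>M\<^esub> y = y \<oplus>\<^bsub>M\<^esub> x"
    by (rule a_comm)
qed

definition PiE_module :: "'i set \<Rightarrow> ('i \<Rightarrow> ('k, 'v) module) \<Rightarrow> ('k, 'i \<Rightarrow> 'v) module" where
  "PiE_module I M = mk_module (\<Pi>\<^sub>E i\<in>I. carrier (M i)) (\<lambda>i\<in>I. \<zero>\<^bsub>M i\<^esub>)
     (\<lambda>f g. \<lambda>i\<in>I. f i \<oplus>\<^bsub>M i\<^esub> g i) (\<lambda>a f. \<lambda>i\<in>I. a \<odot>\<^bsub>M i\<^esub> f i)"

lemma PiE_module_module:
  assumes R: "cring R" and M: "\<And>i. i \<in> I \<Longrightarrow> module R (M i)"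
  shows "module R (PiE_module I M)"
proof (rule moduleI[OF R])
  show "abelian_group (PiE_module I M)"
  proof (rule abelian_groupI)
    fix x assume x: "x \<in> carrier (PiE_module I M)"
    show "\<exists>y\<in>carrier (PiE_module I M). y \<oplus>\<^bsub>PiE_module I M\<^esub> x = \<zero>\<^bsub>PiE_module I M\<^esub>"
      by (rule bexI[of _ "\<lambda>i\<in>I. \<ominus>\<^bsub>M i\<^esub> x i"])
        (use x M in \<open>auto simp: PiE_module_def PiE_def Pi_def
          intro!: ext module_neg_closed module_neg_add\<close>)
  qed (use M in \<open>auto simp: PiE_module_def PiE_def Pi_def extensional_def
         intro!: ext module_add_closed module_zero_closed module_add_assoc module_add_comm
           module_zero_add\<close>)
qed (use M in \<open>auto simp: PiE_module_def PiE_def Pi_def extensional_def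
       intro!: ext module.smult_closed module.smult_l_distr module.smult_r_distr
         module.smult_assoc1 module.smult_one\<close>)

definition pair_module :: "('k, 'a) module \<Rightarrow> ('k, 'b) module \<Rightarrow> ('k, 'a \<times> 'b) module" where
  "pair_module A B = mk_module (carrier A \<times> carrier B) (\<zero>\<^bsub>A\<^esub>, \<zero>\<^bsub>B\<^esub>)
     (\<lambda>(v, w) (v', w'). (v \<oplus>\<^bsub>A\<^esub> v', w \<oplus>\<^bsub>B\<^esub> w')) (\<lambda>a (v, w). (a \<odot>\<^bsub>A\<^esub> v, a \<odot>\<^bsub>B\<^esub> w))"

lemma pair_module_module:
  assumes R: "cring R" and A: "module R A" and B: "module R B"
  shows "module R (pair_module A B)"
proof (rule moduleI[OF R])
  show "abelian_group (pair_module A B)"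
  proof (rule abelian_groupI)
    fix x assume "x \<in> carrier (pair_module A B)"
    then obtain v w where vw: "x = (v, w)" "v \<in> carrier A" "w \<in> carrier B"
      by (auto simp: pair_module_def)
    show "\<exists>y\<in>carrier (pair_module A B). y \<oplus>\<^bsub>pair_module A B\<^esub> x = \<zero>\<^bsub>pair_module A B\<^esub>"
      by (rule bexI[of _ "(\<ominus>\<^bsub>A\<^esub> v, \<ominus>\<^bsub>B\<^esub> w)"])
        (use vw A B in \<open>auto simp: pair_module_def intro: module_neg_closed module_neg_add\<close>)
  qed (use A B in \<open>auto simp: pair_module_def intro: module_add_closed module_zero_closed
         module_add_assoc module_add_comm module_zero_add\<close>)
qed (use A B in \<open>auto simp: pair_module_def intro: module.smult_closed module.smult_l_distr
       module.smult_r_distr module.smult_assoc1 module.smult_one\<close>)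

lemma module_restrict_carrier:
  assumes M: "module R M" and S: "S \<subseteq> carrier M" and zero: "\<zero>\<^bsub>M\<^esub> \<in> S"
    and add: "\<And>x y. x \<in> S \<Longrightarrow> y \<in> S \<Longrightarrow> x \<oplus>\<^bsub>M\<^esub> y \<in> S"
    and smult: "\<And>a x. a \<in> carrier R \<Longrightarrow> x \<in> S \<Longrightarrow> a \<odot>\<^bsub>M\<^esub> x \<in> S"
  shows "module R (M\<lparr>carrier := S\<rparr>)"
proof -
  interpret module R M by fact
  have "submodule S R M"
  proof (rule submoduleI[OF S zero _ add smult])
    fix x assume x: "x \<in> S"
    then have "\<ominus>\<^bsub>M\<^esub> x = (\<ominus>\<^bsub>R\<^esub> \<one>\<^bsub>R\<^esub>) \<odot>\<^bsub>M\<^esub> x"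
      using S by (auto simp: smult_l_minus)
    then show "\<ominus>\<^bsub>M\<^esub> x \<in> S" using smult x by simp
  qed auto
  then show ?thesis by (rule submodule.submodule_is_module[OF _ M])
qed

definition ring_module :: "('k, 'm) ring_scheme \<Rightarrow> ('k, 'k) module" where
  "ring_module R = mk_module (carrier R) \<zero>\<^bsub>R\<^esub> (add R) (mult R)"

lemma ring_module_module:
  assumes R: "cring R"
  shows "module R (ring_module R)"
proof -
  interpret cring R by fact
  show ?thesis
    by (rule moduleI[OF R]) (auto simp: ring_module_def intro!: abelian_groupI a_assoc a_comm
        l_distr r_distr m_assoc intro: l_neg)
qed

lemma finsum_ring_module: "finsum (ring_module R) f A = finsum R f A"
  by (simp add: finsum_def finprod_def ring_module_def)

lemma free_mod_eq_PiE_module: "free_mod R I = PiE_module I (\<lambda>_. ring_module R)"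
  by (simp add: free_mod_def PiE_module_def ring_module_def)

lemma free_mod_module: "cring R \<Longrightarrow> module R (free_mod R I)"
  by (simp add: free_mod_eq_PiE_module PiE_module_module ring_module_module)

lemma carrier_free_mod [simp]: "carrier (free_mod R I) = I \<rightarrow>\<^sub>E carrier R"
  by (simp add: free_mod_def)

lemma free_mod_ops:
  "zero (free_mod R I) = (\<lambda>i\<in>I. \<zero>\<^bsub>R\<^esub>)"
  "add (free_mod R I) = (\<lambda>c d. \<lambda>i\<in>I. c i \<oplus>\<^bsub>R\<^esub> d i)"
  "smult (free_mod R I) = (\<lambda>a c. \<lambda>i\<in>I. a \<otimes>\<^bsub>R\<^esub> c i)"
  by (simp_all add: free_mod_def)

section \<open>Linear maps and free modules\<close>

lemma module_hom_closed: "f \<in> module_hom R M N \<Longrightarrow> x \<in> carrier M \<Longrightarrow> f x \<in> carrier N"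
  and module_hom_add: "f \<in> module_hom R M N \<Longrightarrow> x \<in> carrier M \<Longrightarrow> y \<in> carrier M \<Longrightarrow>
    f (x \<oplus>\<^bsub>M\<^esub> y) = f x \<oplus>\<^bsub>N\<^esub> f y"
  and module_hom_smult: "f \<in> module_hom R M N \<Longrightarrow> a \<in> carrier R \<Longrightarrow> x \<in> carrier M \<Longrightarrow>
    f (a \<odot>\<^bsub>M\<^esub> x) = a \<odot>\<^bsub>N\<^esub> f x"
  by (auto simp: module_hom_def)

lemma module_hom_restrict:
  assumes f: "f \<in> module_hom R M N" and M: "module R M"
  shows "restrict f (carrier M) \<in> module_hom R M N"
proof -
  interpret M: module R M by (rule M)
  show ?thesis using f by (auto simp: module_hom_def)
qed

lemma module_hom_compose:
  assumes f: "f \<in> module_hom R M N" and g: "g \<in> module_hom R N P" and M: "module R M"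
  shows "(\<lambda>x\<in>carrier M. g (f x)) \<in> module_hom R M P"
proof -
  interpret M: module R M by (rule M)
  show ?thesis
    using module_hom_closed[OF f] module_hom_closed[OF g] module_hom_add[OF f] module_hom_add[OF g]
      module_hom_smult[OF f] module_hom_smult[OF g]
    by (auto simp: module_hom_def)
qed

lemma module_hom_zero:
  assumes f: "f \<in> module_hom R M N" and M: "module R M" and N: "module R N"
  shows "f \<zero>\<^bsub>M\<^esub> = \<zero>\<^bsub>N\<^esub>"
proof -
  interpret M: module R M by fact
  interpret N: module R N by fact
  have "f \<zero>\<^bsub>M\<^esub> = f (\<zero>\<^bsub>R\<^esub> \<odot>\<^bsub>M\<^esub> \<zero>\<^bsub>M\<^esub>)" by simp
  also have "\<dots> = \<zero>\<^bsub>R\<^esub> \<odot>\<^bsub>N\<^esub> f \<zero>\<^bsub>M\<^esub>" by (rule module_hom_smult[OF f]) auto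
  also have "\<dots> = \<zero>\<^bsub>N\<^esub>" using module_hom_closed[OF f M.zero_closed] by simp
  finally show ?thesis .
qed

lemma module_hom_finsum:
  assumes f: "f \<in> module_hom R M N" and M: "module R M" and N: "module R N"
    and A: "finite A" and g: "g \<in> A \<rightarrow> carrier M"
  shows "f (\<Oplus>\<^bsub>M\<^esub>i\<in>A. g i) = (\<Oplus>\<^bsub>N\<^esub>i\<in>A. f (g i))"
proof -
  interpret M: module R M by fact
  interpret N: module R N by fact
  show ?thesis
    using A g
  proof (induction A rule: finite_induct)
    case empty
    then show ?case using module_hom_zero[OF f M N] by simp
  next
    case (insert x F)
    have "(\<lambda>i. f (g i)) \<in> F \<rightarrow> carrier N" using insert.prems module_hom_closed[OF f] by auto
    then show ?case using insert module_hom_closed[OF f]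
      by (simp add: M.finsum_insert N.finsum_insert module_hom_add[OF f] M.finsum_closed)
  qed
qed

lemma (in abelian_monoid) finsum_over_fibres:
  assumes A: "finite A" and c: "c \<in> A \<rightarrow> carrier G" and B: "finite B"
  shows "(\<Oplus>b\<in>B. \<Oplus>a\<in>{a\<in>A. p a = b}. c a) = (\<Oplus>a\<in>{a\<in>A. p a \<in> B}. c a)"
proof -
  have "(\<Oplus>a\<in>(\<Union>b\<in>B. {a\<in>A. p a = b}). c a) = (\<Oplus>b\<in>B. \<Oplus>a\<in>{a\<in>A. p a = b}. c a)"
    using A c B by (intro add.finprod_UN_disjoint) (auto simp: pairwise_def disjnt_def)
  moreover have "(\<Union>b\<in>B. {a\<in>A. p a = b}) = {a\<in>A. p a \<in> B}" by auto
  ultimately show ?thesis by simp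
qed

lemma (in module) finsum_smult_rdistr:
  assumes "finite A" "c \<in> A \<rightarrow> carrier R" "x \<in> carrier M"
  shows "(\<Oplus>\<^bsub>R\<^esub>i\<in>A. c i) \<odot>\<^bsub>M\<^esub> x = (\<Oplus>\<^bsub>M\<^esub>i\<in>A. c i \<odot>\<^bsub>M\<^esub> x)"
  using assms
proof (induction A rule: finite_induct)
  case (insert a F)
  then show ?case
    by (simp add: R.finsum_insert finsum_insert smult_l_distr R.finsum_closed Pi_def)
qed simp

definition basis_vec :: "('k, 'm) ring_scheme \<Rightarrow> 'i set \<Rightarrow> 'i \<Rightarrow> 'i \<Rightarrow> 'k" where
  "basis_vec R I i = (\<lambda>j\<in>I. if j = i then \<one>\<^bsub>R\<^esub> else \<zero>\<^bsub>R\<^esub>)"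

definition free_push :: "('k, 'm) ring_scheme \<Rightarrow> 'i set \<Rightarrow> 'j set \<Rightarrow> ('i \<Rightarrow> 'j)
    \<Rightarrow> ('i \<Rightarrow> 'k) \<Rightarrow> ('j \<Rightarrow> 'k)" where
  "free_push R I J p c = (\<lambda>j\<in>J. \<Oplus>\<^bsub>R\<^esub>i\<in>{i\<in>I. p i = j}. c i)"

definition free_lift :: "('k, 'v) module \<Rightarrow> 'i set \<Rightarrow> ('i \<Rightarrow> 'v) \<Rightarrow> ('i \<Rightarrow> 'k) \<Rightarrow> 'v" where
  "free_lift N I e c = (\<Oplus>\<^bsub>N\<^esub>i\<in>I. c i \<odot>\<^bsub>N\<^esub> e i)"

context
  fixes R :: "('k, 'm) ring_scheme" (structure)
  assumes R: "cring R"
begin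

lemma basis_vec_carrier: "basis_vec R I i \<in> carrier (free_mod R I)"
  using cring.axioms(1)[OF R] by (auto simp: basis_vec_def ring.ring_simprules)

lemma basis_vec_PiE: "basis_vec R I i \<in> I \<rightarrow>\<^sub>E carrier R"
  using basis_vec_carrier by simp

lemma free_push_closed:
  assumes "c \<in> carrier (free_mod R I)"
  shows "free_push R I J p c \<in> carrier (free_mod R J)"
proof -
  interpret cring R by (rule R)
  show ?thesis using assms by (auto simp: free_push_def PiE_def Pi_def intro!: finsum_closed)
qed

lemma free_push_hom:
  assumes I: "finite I"
  shows "free_push R I J p \<in> module_hom R (free_mod R I) (free_mod R J)"
  unfolding module_hom_def
proof (intro CollectI conjI ballI Pi_I)
  interpret cring R by (rule R)
  have fin: "finite {i\<in>I. P i}" for P using I by simp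
  fix c assume c: "c \<in> carrier (free_mod R I)"
  then show "free_push R I J p c \<in> carrier (free_mod R J)" by (rule free_push_closed)
  have cR: "c \<in> {i\<in>I. P i} \<rightarrow> carrier R" for P using c by (auto simp: PiE_def)
  {
    fix d assume d: "d \<in> carrier (free_mod R I)"
    have dR: "d \<in> {i\<in>I. P i} \<rightarrow> carrier R" for P using d by (auto simp: PiE_def)
    show "free_push R I J p (c \<oplus>\<^bsub>free_mod R I\<^esub> d)
        = free_push R I J p c \<oplus>\<^bsub>free_mod R J\<^esub> free_push R I J p d"
      using cR dR by (auto simp: free_push_def free_mod_ops Pi_def
          intro!: restrict_ext trans[OF finsum_cong' finsum_addf])
  next
    fix a assume a: "a \<in> carrier R"
    show "free_push R I J p (a \<odot>\<^bsub>free_mod R I\<^esub> c) = a \<odot>\<^bsub>free_mod R J\<^esub> free_push R I J p c"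
      using cR a fin by (auto simp: free_push_def free_mod_ops Pi_def
          intro!: restrict_ext trans[OF finsum_cong' finsum_rdistr[symmetric]])
  }
qed

lemma free_push_basis_vec:
  assumes I: "finite I" and i: "i \<in> I" and p: "p i \<in> J"
  shows "free_push R I J p (basis_vec R I i) = basis_vec R J (p i)"
  unfolding free_push_def basis_vec_def[of R J]
proof (rule restrict_ext)
  interpret cring R by (rule R)
  fix j assume "j \<in> J"
  have "(\<Oplus>i'\<in>{i'\<in>I. p i' = j}. basis_vec R I i i')
      = (\<Oplus>i'\<in>{i'\<in>I. p i' = j}. if i' = i then \<one> else \<zero>)"
    by (intro finsum_cong') (auto simp: basis_vec_def)
  also have "\<dots> = (if p i = j then \<one> else \<zero>)"
  proof (cases "p i = j")
    case True
    then show ?thesis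
      using add.finprod_singleton_swap[of i "{i'\<in>I. p i' = j}" "\<lambda>_. \<one>"] I i by auto
  next
    case False
    then have "(\<Oplus>i'\<in>{i'\<in>I. p i' = j}. if i' = i then \<one> else \<zero>) = (\<Oplus>i'\<in>{i'\<in>I. p i' = j}. \<zero>)"
      by (intro finsum_cong') auto
    then show ?thesis using False by simp
  qed
  finally show "(\<Oplus>i'\<in>{i'\<in>I. p i' = j}. basis_vec R I i i') = (if j = p i then \<one> else \<zero>)"
    by auto
qed

lemma free_push_free_push:
  assumes I: "finite I" and J: "finite J" and p: "p \<in> I \<rightarrow> J"
    and c: "c \<in> carrier (free_mod R I)"
  shows "free_push R J K q (free_push R I J p c) = free_push R I K (\<lambda>i. q (p i)) c"
  unfolding free_push_def[of R J K] free_push_def[of R I K]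
proof (rule restrict_ext)
  interpret cring R by (rule R)
  fix k assume "k \<in> K"
  have cR: "c \<in> I \<rightarrow> carrier R" using c by auto
  have "(\<Oplus>j\<in>{j\<in>J. q j = k}. free_push R I J p c j)
      = (\<Oplus>j\<in>{j\<in>J. q j = k}. \<Oplus>i\<in>{i\<in>I. p i = j}. c i)"
    using cR by (intro finsum_cong') (auto simp: free_push_def intro!: finsum_closed)
  also have "\<dots> = (\<Oplus>i\<in>{i\<in>I. p i \<in> {j\<in>J. q j = k}}. c i)"
    using I J cR by (intro finsum_over_fibres) auto
  also have "{i\<in>I. p i \<in> {j\<in>J. q j = k}} = {i\<in>I. q (p i) = k}" using p by auto
  finally show "(\<Oplus>j\<in>{j\<in>J. q j = k}. free_push R I J p c j) = (\<Oplus>i\<in>{i\<in>I. q (p i) = k}. c i)" .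
qed

lemma free_lift_hom:
  assumes N: "module R N" and I: "finite I" and e: "e \<in> I \<rightarrow> carrier N"
  shows "free_lift N I e \<in> module_hom R (free_mod R I) N"
  unfolding module_hom_def
proof (intro CollectI conjI ballI Pi_I)
  interpret N: module R N by (rule N)
  fix c assume c: "c \<in> carrier (free_mod R I)"
  have cl: "(\<lambda>i. c' i \<odot>\<^bsub>N\<^esub> e i) \<in> I \<rightarrow> carrier N" if "c' \<in> carrier (free_mod R I)" for c'
    using that e by auto
  show "free_lift N I e c \<in> carrier N"
    using cl[OF c] by (simp add: free_lift_def N.finsum_closed)
  {
    fix d assume d: "d \<in> carrier (free_mod R I)"
    have "free_lift N I e (c \<oplus>\<^bsub>free_mod R I\<^esub> d)
        = (\<Oplus>\<^bsub>N\<^esub>i\<in>I. c i \<odot>\<^bsub>N\<^esub> e i \<oplus>\<^bsub>N\<^esub> d i \<odot>\<^bsub>N\<^esub> e i)"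
      using c d e unfolding free_lift_def
      by (intro N.finsum_cong') (auto simp: free_mod_ops Pi_def PiE_def intro: N.smult_l_distr)
    then show "free_lift N I e (c \<oplus>\<^bsub>free_mod R I\<^esub> d) = free_lift N I e c \<oplus>\<^bsub>N\<^esub> free_lift N I e d"
      using cl[OF c] cl[OF d] by (simp add: free_lift_def N.finsum_addf)
  next
    fix a assume a: "a \<in> carrier R"
    have "free_lift N I e (a \<odot>\<^bsub>free_mod R I\<^esub> c) = (\<Oplus>\<^bsub>N\<^esub>i\<in>I. a \<odot>\<^bsub>N\<^esub> (c i \<odot>\<^bsub>N\<^esub> e i))"
      using a c e by (auto simp: free_lift_def free_mod_ops intro!: N.finsum_cong' N.smult_assoc1)
    then show "free_lift N I e (a \<odot>\<^bsub>free_mod R I\<^esub> c) = a \<odot>\<^bsub>N\<^esub> free_lift N I e c"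
      using cl[OF c] a I by (simp add: free_lift_def N.finsum_smult_ldistr)
  }
qed

lemma free_lift_cong:
  assumes N: "module R N" and c: "c \<in> carrier (free_mod R I)" and e': "e' \<in> I \<rightarrow> carrier N"
    and eq: "\<And>i. i \<in> I \<Longrightarrow> e i = e' i"
  shows "free_lift N I e c = free_lift N I e' c"
proof -
  interpret N: module R N by (rule N)
  show ?thesis unfolding free_lift_def using c e' eq by (intro N.finsum_cong') auto
qed

lemma free_lift_basis_vec:
  assumes N: "module R N" and I: "finite I" and e: "e \<in> I \<rightarrow> carrier N" and i: "i \<in> I"
  shows "free_lift N I e (basis_vec R I i) = e i"
proof -
  interpret N: module R N by (rule N)
  have "free_lift N I e (basis_vec R I i) = (\<Oplus>\<^bsub>N\<^esub>j\<in>I. if i = j then e j else \<zero>\<^bsub>N\<^esub>)"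
    unfolding free_lift_def using e by (intro N.finsum_cong') (auto simp: basis_vec_def Pi_def)
  also have "\<dots> = e i" using N.finsum_singleton[OF i I] e by auto
  finally show ?thesis .
qed

lemma module_hom_free_lift:
  assumes T: "T \<in> module_hom R N N'" and N: "module R N" and N': "module R N'"
    and I: "finite I" and e: "e \<in> I \<rightarrow> carrier N" and c: "c \<in> carrier (free_mod R I)"
  shows "T (free_lift N I e c) = free_lift N' I (\<lambda>i. T (e i)) c"
proof -
  interpret N: module R N by (rule N)
  interpret N': module R N' by (rule N')
  have cR: "\<And>i. i \<in> I \<Longrightarrow> c i \<in> carrier R" using c by auto
  have "T (free_lift N I e c) = (\<Oplus>\<^bsub>N'\<^esub>i\<in>I. T (c i \<odot>\<^bsub>N\<^esub> e i))"
    unfolding free_lift_def using cR e by (intro module_hom_finsum[OF T N N' I]) auto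
  also have "\<dots> = free_lift N' I (\<lambda>i. T (e i)) c"
    unfolding free_lift_def using cR e module_hom_closed[OF T]
    by (intro N'.finsum_cong') (auto simp: Pi_def intro!: module_hom_smult[OF T] N'.smult_closed)
  finally show ?thesis .
qed

lemma free_lift_free_push:
  assumes N: "module R N" and I: "finite I" and J: "finite J" and p: "p \<in> I \<rightarrow> J"
    and e: "e \<in> J \<rightarrow> carrier N" and c: "c \<in> carrier (free_mod R I)"
  shows "free_lift N J e (free_push R I J p c) = free_lift N I (\<lambda>i. e (p i)) c"
proof -
  interpret N: module R N by (rule N)
  have cR: "c \<in> I \<rightarrow> carrier R" using c by auto
  have "free_lift N J e (free_push R I J p c)
      = (\<Oplus>\<^bsub>N\<^esub>j\<in>J. \<Oplus>\<^bsub>N\<^esub>i\<in>{i\<in>I. p i = j}. c i \<odot>\<^bsub>N\<^esub> e (p i))"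
    unfolding free_lift_def
  proof (intro N.finsum_cong')
    fix j assume j: "j \<in> J"
    have "free_push R I J p c j \<odot>\<^bsub>N\<^esub> e j = (\<Oplus>\<^bsub>N\<^esub>i\<in>{i\<in>I. p i = j}. c i \<odot>\<^bsub>N\<^esub> e j)"
      unfolding free_push_def using I cR e j by (auto intro!: N.finsum_smult_rdistr)
    also have "\<dots> = (\<Oplus>\<^bsub>N\<^esub>i\<in>{i\<in>I. p i = j}. c i \<odot>\<^bsub>N\<^esub> e (p i))"
      using cR e j by (intro N.finsum_cong') auto
    finally show "free_push R I J p c j \<odot>\<^bsub>N\<^esub> e j = (\<Oplus>\<^bsub>N\<^esub>i\<in>{i\<in>I. p i = j}. c i \<odot>\<^bsub>N\<^esub> e (p i))" .
  qed (use cR e in \<open>auto intro!: N.finsum_closed\<close>)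
  also have "\<dots> = (\<Oplus>\<^bsub>N\<^esub>i\<in>{i\<in>I. p i \<in> J}. c i \<odot>\<^bsub>N\<^esub> e (p i))"
    using I J cR e p by (intro N.finsum_over_fibres) auto
  also have "{i\<in>I. p i \<in> J} = I" using p by auto
  finally show ?thesis by (simp add: free_lift_def)
qed

lemma PiE_module_finsum_apply:
  assumes M: "\<And>i. i \<in> I \<Longrightarrow> module R (M i)" and J: "finite J"
    and F: "F \<in> J \<rightarrow> carrier (PiE_module I M)" and i: "i \<in> I"
  shows "(\<Oplus>\<^bsub>PiE_module I M\<^esub>j\<in>J. F j) i = (\<Oplus>\<^bsub>M i\<^esub>j\<in>J. F j i)"
proof -
  interpret P: module R "PiE_module I M" by (rule PiE_module_module[OF R M])
  interpret Mi: module R "M i" by (rule M[OF i])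
  show ?thesis
    using J F
  proof (induction J rule: finite_induct)
    case empty
    show ?case using i by (simp only: P.finsum_empty Mi.finsum_empty) (simp add: PiE_module_def)
  next
    case (insert x J)
  have FJ: "F \<in> J \<rightarrow> carrier (PiE_module I M)" and Fx: "F x \<in> carrier (PiE_module I M)"
    using insert.prems by auto
  have "(\<lambda>j. F j i) \<in> J \<rightarrow> carrier (M i)" "F x i \<in> carrier (M i)"
    using FJ Fx i by (auto simp: PiE_module_def)
    then show ?case
      using insert FJ Fx i by (simp add: P.finsum_insert Mi.finsum_insert) (simp add: PiE_module_def)
  qed
qed

lemma basis_expansion_closed:
  assumes c: "c \<in> carrier (free_mod R I)"
  shows "(\<lambda>i. c i \<odot>\<^bsub>free_mod R I\<^esub> basis_vec R I i) \<in> I \<rightarrow> carrier (free_mod R I)"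
proof
  interpret F: module R "free_mod R I" by (rule free_mod_module[OF R])
  fix i assume "i \<in> I"
  then have "c i \<in> carrier R" using c by auto
  then show "c i \<odot>\<^bsub>free_mod R I\<^esub> basis_vec R I i \<in> carrier (free_mod R I)"
    by (rule F.smult_closed[OF _ basis_vec_carrier])
qed

lemma free_mod_decomp:
  assumes I: "finite I" and c: "c \<in> carrier (free_mod R I)"
  shows "c = (\<Oplus>\<^bsub>free_mod R I\<^esub>i\<in>I. c i \<odot>\<^bsub>free_mod R I\<^esub> basis_vec R I i)"
proof (rule extensionalityI[of _ I])
  interpret cring R by (rule R)
  interpret F: module R "free_mod R I" by (rule free_mod_module[OF R])
  have cl: "(\<lambda>i. c i \<odot>\<^bsub>free_mod R I\<^esub> basis_vec R I i) \<in> I \<rightarrow> carrier (free_mod R I)"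
    by (rule basis_expansion_closed[OF c])
  show "c \<in> extensional I" using c by (simp add: PiE_def)
  show "(\<Oplus>\<^bsub>free_mod R I\<^esub>i\<in>I. c i \<odot>\<^bsub>free_mod R I\<^esub> basis_vec R I i) \<in> extensional I"
    using F.finsum_closed[OF cl] by (simp add: PiE_def)
  fix k assume k: "k \<in> I"
  have "(\<Oplus>\<^bsub>free_mod R I\<^esub>i\<in>I. c i \<odot>\<^bsub>free_mod R I\<^esub> basis_vec R I i) k
      = (\<Oplus>i\<in>I. (c i \<odot>\<^bsub>free_mod R I\<^esub> basis_vec R I i) k)"
    using PiE_module_finsum_apply[OF ring_module_module[OF R] I _ k] cl
    by (simp add: free_mod_eq_PiE_module finsum_ring_module)
  also have "\<dots> = (\<Oplus>i\<in>I. if k = i then c i else \<zero>)"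
    using k c by (intro finsum_cong') (auto simp: basis_vec_def PiE_def Pi_def free_mod_ops)
  also have "\<dots> = c k" using add.finprod_singleton[of k I c] k I c by (auto simp: PiE_def)
  finally show "c k = (\<Oplus>\<^bsub>free_mod R I\<^esub>i\<in>I. c i \<odot>\<^bsub>free_mod R I\<^esub> basis_vec R I i) k" by simp
qed

lemma module_hom_free_mod_eq_free_lift:
  assumes I: "finite I" and N: "module R N"
    and f: "f \<in> module_hom R (free_mod R I) N" and c: "c \<in> carrier (free_mod R I)"
  shows "f c = free_lift N I (\<lambda>i. f (basis_vec R I i)) c"
proof -
  interpret F: module R "free_mod R I" by (rule free_mod_module[OF R])
  interpret N: module R N by (rule N)
  have cl: "(\<lambda>i. c i \<odot>\<^bsub>free_mod R I\<^esub> basis_vec R I i) \<in> I \<rightarrow> carrier (free_mod R I)"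
    by (rule basis_expansion_closed[OF c])
  have "f c = f (\<Oplus>\<^bsub>free_mod R I\<^esub>i\<in>I. c i \<odot>\<^bsub>free_mod R I\<^esub> basis_vec R I i)"
    using free_mod_decomp[OF I c] by simp
  also have "\<dots> = (\<Oplus>\<^bsub>N\<^esub>i\<in>I. f (c i \<odot>\<^bsub>free_mod R I\<^esub> basis_vec R I i))"
    by (rule module_hom_finsum[OF f free_mod_module[OF R] N I cl])
  also have "\<dots> = free_lift N I (\<lambda>i. f (basis_vec R I i)) c"
    unfolding free_lift_def
  proof (intro N.finsum_cong')
    fix i assume "i \<in> I"
    then have "c i \<in> carrier R" using c by auto
    then show "f (c i \<odot>\<^bsub>free_mod R I\<^esub> basis_vec R I i) = c i \<odot>\<^bsub>N\<^esub> f (basis_vec R I i)"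
      by (rule module_hom_smult[OF f _ basis_vec_carrier])
  next
    show "(\<lambda>i. c i \<odot>\<^bsub>N\<^esub> f (basis_vec R I i)) \<in> I \<rightarrow> carrier N"
      using c module_hom_closed[OF f basis_vec_carrier] by (auto intro!: N.smult_closed)
  qed simp
  finally show ?thesis .
qed

end

section \<open>Injections and the shift \<open>\<sigma>\<close>\<close>

lemma finite_FIm: "finite X \<Longrightarrow> finite Y \<Longrightarrow> finite (FIm X Y)"
  unfolding FIm_def by (rule finite_subset[of _ "X \<rightarrow>\<^sub>E Y"]) (auto intro: finite_PiE)

lemma finite_sig [simp]: "finite Z \<Longrightarrow> finite (sig Z)"
  by (simp add: sig_def)

lemma mem_sig: "n \<in> sig Z \<longleftrightarrow> n = 0 \<or> (n \<noteq> 0 \<and> n - 1 \<in> Z)"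
  by (cases n) (auto simp: sig_def)

lemma FImD: "f \<in> FIm X Y \<Longrightarrow> x \<in> X \<Longrightarrow> f x \<in> Y"
  and FIm_inj: "f \<in> FIm X Y \<Longrightarrow> inj_on f X"
  and FIm_funcset: "f \<in> FIm X Y \<Longrightarrow> f \<in> X \<rightarrow> Y"
  by (auto simp: FIm_def)

lemma FImI: "(\<And>x. x \<in> X \<Longrightarrow> f x \<in> Y) \<Longrightarrow> inj_on f X \<Longrightarrow> f \<in> extensional X \<Longrightarrow> f \<in> FIm X Y"
  by (auto simp: FIm_def PiE_def)

lemma FIm_eqI: "f \<in> FIm X Y \<Longrightarrow> g \<in> FIm X Z \<Longrightarrow> (\<And>x. x \<in> X \<Longrightarrow> f x = g x) \<Longrightarrow> f = g"
  by (auto simp: FIm_def PiE_def intro: extensionalityI)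

lemma FIm_id: "restrict id X \<in> FIm X X"
  by (auto intro!: FImI)

lemma FIm_compose: "f \<in> FIm X Y \<Longrightarrow> g \<in> FIm Y Z \<Longrightarrow> compose X g f \<in> FIm X Z"
  unfolding FIm_def compose_def by (auto simp: PiE_def Pi_def inj_on_def)

lemma FIm_restrict_Diff:
  assumes f: "f \<in> FIm X Y" and x: "x \<in> X"
  shows "restrict f (X - {x}) \<in> FIm (X - {x}) (Y - {f x})"
  using FImD[OF f] FIm_inj[OF f] x by (intro FImI) (auto simp: inj_on_def)

lemma FIm_Diff_codomain: "f \<in> FIm X Y \<Longrightarrow> y \<notin> f ` X \<Longrightarrow> f \<in> FIm X (Y - {y})"
  by (auto simp: FIm_def PiE_def Pi_def)

lemma FIm_the_inv_into: "f \<in> FIm X Y \<Longrightarrow> x \<in> X \<Longrightarrow> the_inv_into X f (f x) = x"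
  by (rule the_inv_into_f_f[OF FIm_inj])

lemma compose_restrict_Diff:
  assumes f: "f \<in> FIm X Y" and x: "x \<in> X"
  shows "compose (X - {x}) (restrict g (Y - {f x})) (restrict f (X - {x}))
       = restrict (compose X g f) (X - {x})"
  using FImD[OF f] inj_onD[OF FIm_inj[OF f] _ _ x] by (auto simp: compose_def fun_eq_iff)

lemma compose_restrict_miss:
  assumes f: "f \<in> FIm X Y" and y: "y \<notin> f ` X"
  shows "compose X (restrict g (Y - {y})) f = compose X g f"
  using FImD[OF f] y by (auto simp: compose_def intro!: ext)

lemma sigf_FIm: "g \<in> FIm Z W \<Longrightarrow> sigf Z g \<in> FIm (sig Z) (sig W)"
  unfolding FIm_def sigf_def sig_def by (auto simp: PiE_def Pi_def inj_on_def)

text \<open>In the model \<open>\<sigma>Z = {0} \<union> Suc ` Z\<close> the point \<open>\<star>\<close> is \<open>0\<close> and \<open>z \<in> Z\<close> is \<open>Suc z\<close>.  So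
  \<open>sig_incl X\<close> is \<open>\<iota>\<^sub>X : X \<rightarrow> \<sigma>X\<close>, \<open>sig_at X x\<close> is \<open>\<tau>\<^sub>x : X \<rightarrow> \<sigma>(X - {x})\<close>, and for \<open>h : X \<rightarrow> \<sigma>Z\<close>
  avoiding \<open>\<star>\<close> on \<open>S\<close>, \<open>unsig S h : S \<rightarrow> Z\<close> is the injection it induces on \<open>S\<close>.\<close>

definition unsig :: "nat set \<Rightarrow> (nat \<Rightarrow> nat) \<Rightarrow> nat \<Rightarrow> nat" where
  "unsig S h = (\<lambda>x\<in>S. h x - 1)"

definition sig_incl :: "nat set \<Rightarrow> nat \<Rightarrow> nat" where
  "sig_incl X = (\<lambda>x\<in>X. Suc x)"

definition sig_at :: "nat set \<Rightarrow> nat \<Rightarrow> nat \<Rightarrow> nat" where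
  "sig_at X x0 = (\<lambda>x\<in>X. if x = x0 then 0 else Suc x)"

lemma sig_incl_FIm: "sig_incl X \<in> FIm X (sig X)"
  by (auto simp: sig_incl_def sig_def intro!: FImI inj_onI)

lemma sig_at_FIm: "sig_at X x \<in> FIm X (sig (X - {x}))"
  by (auto simp: sig_at_def sig_def intro!: FImI inj_onI split: if_splits)

lemma unsig_FIm:
  assumes h: "h \<in> FIm X (sig Z)" and S: "S \<subseteq> X" and nz: "\<And>x. x \<in> S \<Longrightarrow> h x \<noteq> 0"
  shows "unsig S h \<in> FIm S Z"
proof (rule FImI)
  fix x assume "x \<in> S"
  then show "unsig S h x \<in> Z" using FImD[OF h, of x] S nz by (auto simp: unsig_def mem_sig)
next
  show "inj_on (unsig S h) S"
  proof (rule inj_onI)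
    fix x y assume xy: "x \<in> S" "y \<in> S" "unsig S h x = unsig S h y"
    then have "h x = h y" using nz[of x] nz[of y] by (simp add: unsig_def)
    then show "x = y" using FIm_inj[OF h] xy S by (auto dest: inj_onD)
  qed
qed (simp add: unsig_def)

lemma FIm_sig_star_unique:
  assumes h: "h \<in> FIm X (sig Z)" and x0: "x0 \<in> X" "h x0 = 0" and x: "x \<in> X - {x0}"
  shows "h x \<noteq> 0"
  using inj_onD[OF FIm_inj[OF h], of x x0] x0 x by auto

lemma unsig_compose_sigf:
  assumes h: "h \<in> FIm X (sig Z)" and S: "S \<subseteq> X" and nz: "\<And>x. x \<in> S \<Longrightarrow> h x \<noteq> 0"
  shows "unsig S (compose X (sigf Z g) h) = compose S g (unsig S h)"
proof (rule ext)
  fix x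
  show "unsig S (compose X (sigf Z g) h) x = compose S g (unsig S h) x"
  proof (cases "x \<in> S")
    case True
    then have "h x \<noteq> 0" "h x \<in> sig Z" using nz FImD[OF h] S by auto
    then show ?thesis using True S by (auto simp: unsig_def compose_def sigf_def)
  qed (simp add: unsig_def compose_def)
qed

lemma sig_star_notin_compose_sigf:
  assumes h: "h \<in> FIm X (sig Z)" and nz: "0 \<notin> h ` X"
  shows "0 \<notin> compose X (sigf Z g) h ` X"
  using FImD[OF h] nz by (auto simp: compose_def sigf_def mem_sig split: if_splits)

lemma sigf_unsig_sig_incl:
  assumes h: "h \<in> FIm X (sig Z)" and nz: "0 \<notin> h ` X"
  shows "compose X (sigf X (unsig X h)) (sig_incl X) = h"
proof (rule FIm_eqI[OF _ h])
  show "compose X (sigf X (unsig X h)) (sig_incl X) \<in> FIm X (sig Z)"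
    using FIm_compose[OF sig_incl_FIm sigf_FIm[OF unsig_FIm[OF h order_refl]]] nz by force
  fix x assume x: "x \<in> X"
  then have "h x \<noteq> 0" using nz by force
  then show "compose X (sigf X (unsig X h)) (sig_incl X) x = h x"
    using x by (simp add: compose_def sigf_def sig_incl_def sig_def unsig_def)
qed

lemma sigf_unsig_sig_at:
  assumes h: "h \<in> FIm X (sig Z)" and x0: "x0 \<in> X" "h x0 = 0"
  shows "compose X (sigf (X - {x0}) (unsig (X - {x0}) h)) (sig_at X x0) = h"
proof (rule FIm_eqI[OF _ h])
  note nz = FIm_sig_star_unique[OF h x0]
  show "compose X (sigf (X - {x0}) (unsig (X - {x0}) h)) (sig_at X x0) \<in> FIm X (sig Z)"
    using FIm_compose[OF sig_at_FIm sigf_FIm[OF unsig_FIm[OF h _ nz]]] by force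
  fix x assume "x \<in> X"
  then show "compose X (sigf (X - {x0}) (unsig (X - {x0}) h)) (sig_at X x0) x = h x"
    using x0 nz[of x] by (auto simp: compose_def sigf_def sig_at_def sig_def unsig_def)
qed

text \<open>These three identities are the source of the matrix defining \<open>Q'\<close>.\<close>

lemma sig_incl_compose:
  assumes f: "f \<in> FIm X Y"
  shows "compose X (sig_incl Y) f = compose X (sigf X f) (sig_incl X)"
  using FImD[OF f] by (auto simp: compose_def sig_incl_def sigf_def sig_def intro!: ext)

lemma sig_at_compose_image:
  assumes f: "f \<in> FIm X Y" and x: "x \<in> X"
  shows "compose X (sig_at Y (f x)) f
       = compose X (sigf (X - {x}) (restrict f (X - {x}))) (sig_at X x)"
  using FImD[OF f] FIm_inj[OF f] x
  by (auto simp: compose_def sig_at_def sigf_def sig_def inj_on_def intro!: ext)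

lemma sig_at_compose_miss:
  assumes f: "f \<in> FIm X Y" and y: "y \<notin> f ` X"
  shows "compose X (sig_at Y y) f = compose X (sigf X f) (sig_incl X)"
  using FImD[OF f] y by (auto simp: compose_def sig_at_def sig_incl_def sigf_def sig_def intro!: ext)

section \<open>The FI-modules \<open>S(M(X))\<close> and the maps \<open>\<rho>\<^sub>f\<close>\<close>

lemma FMod_Shift_Mfree [simp]: "FMod (Shift (Mfree R X)) Z = free_mod R (FIm X (sig Z))"
  by (simp add: Shift_def Mfree_def)

lemma FAct_Shift_Mfree:
  "FAct (Shift (Mfree R X)) Z W g = free_push R (FIm X (sig Z)) (FIm X (sig W)) (compose X (sigf Z g))"
  by (simp add: Shift_def Mfree_def free_push_def fun_eq_iff)

lemma rho_eq_free_push: "rho R X Y f Z = free_push R (FIm Y Z) (FIm X Z) (\<lambda>g. compose X g f)"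
  by (simp add: rho_def free_push_def fun_eq_iff)

context
  fixes R :: "('k, 'm) ring_scheme"
  assumes R: "cring R"
begin

lemma Shift_Mfree_closed:
  "c \<in> carrier (FMod (Shift (Mfree R X)) Z) \<Longrightarrow>
   FAct (Shift (Mfree R X)) Z W g c \<in> carrier (FMod (Shift (Mfree R X)) W)"
  unfolding FAct_Shift_Mfree FMod_Shift_Mfree by (rule free_push_closed[OF R])

lemma Shift_Mfree_basis_vec:
  assumes X: "finite X" and Z: "finite Z" and g: "g \<in> FIm Z W" and h: "h \<in> FIm X (sig Z)"
  shows "FAct (Shift (Mfree R X)) Z W g (basis_vec R (FIm X (sig Z)) h)
       = basis_vec R (FIm X (sig W)) (compose X (sigf Z g) h)"
  unfolding FAct_Shift_Mfree
  by (rule free_push_basis_vec[OF R finite_FIm[OF X finite_sig[OF Z]] h])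
    (rule FIm_compose[OF h sigf_FIm[OF g]])

lemma rho_closed:
  "c \<in> carrier (free_mod R (FIm Y Z)) \<Longrightarrow> rho R X Y f Z c \<in> carrier (free_mod R (FIm X Z))"
  unfolding rho_eq_free_push by (rule free_push_closed[OF R])

lemma rho_hom:
  "finite Y \<Longrightarrow> finite Z \<Longrightarrow> rho R X Y f Z \<in> module_hom R (free_mod R (FIm Y Z)) (free_mod R (FIm X Z))"
  unfolding rho_eq_free_push by (rule free_push_hom[OF R finite_FIm])

lemma rho_basis_vec:
  assumes Y: "finite Y" and Z: "finite Z" and f: "f \<in> FIm X Y" and g: "g \<in> FIm Y Z"
  shows "rho R X Y f Z (basis_vec R (FIm Y Z) g) = basis_vec R (FIm X Z) (compose X g f)"
  unfolding rho_eq_free_push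
  by (rule free_push_basis_vec[OF R finite_FIm[OF Y Z] g]) (rule FIm_compose[OF f g])

lemma rho_natural:
  assumes X: "finite X" and Y: "finite Y" and Z: "finite Z" and W: "finite W"
    and f: "f \<in> FIm X Y" and g: "g \<in> FIm Z W" and c: "c \<in> carrier (free_mod R (FIm Y (sig Z)))"
  shows "rho R X Y f (sig W) (FAct (Shift (Mfree R Y)) Z W g c)
       = FAct (Shift (Mfree R X)) Z W g (rho R X Y f (sig Z) c)"
proof -
  have fin: "finite (FIm A (sig B))" if "finite A" "finite B" for A B
    using finite_FIm[OF that(1) finite_sig[OF that(2)]] .
  have "rho R X Y f (sig W) (FAct (Shift (Mfree R Y)) Z W g c)
      = free_push R (FIm Y (sig Z)) (FIm X (sig W)) (\<lambda>k. compose X (compose Y (sigf Z g) k) f) c"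
    unfolding rho_eq_free_push FAct_Shift_Mfree using FIm_compose[OF _ sigf_FIm[OF g]]
    by (intro free_push_free_push[OF R fin[OF Y Z] fin[OF Y W] _ c]) auto
  also have "\<dots> = free_push R (FIm Y (sig Z)) (FIm X (sig W)) (\<lambda>k. compose X (sigf Z g) (compose X k f)) c"
    by (simp add: compose_assoc[OF FIm_funcset[OF f]])
  also have "\<dots> = FAct (Shift (Mfree R X)) Z W g (rho R X Y f (sig Z) c)"
    unfolding rho_eq_free_push FAct_Shift_Mfree using FIm_compose[OF f]
    by (intro free_push_free_push[OF R fin[OF Y Z] fin[OF X Z] _ c, symmetric]) auto
  finally show ?thesis .
qed

end

section \<open>FI-modules and their homomorphisms\<close>

lemma FI_module_module: "is_FI_module R V \<Longrightarrow> finite X \<Longrightarrow> module R (FMod V X)"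
  by (simp add: is_FI_module_def)

lemma FI_module_hom: "is_FI_module R V \<Longrightarrow> finite X \<Longrightarrow> finite Y \<Longrightarrow> f \<in> FIm X Y \<Longrightarrow>
    FAct V X Y f \<in> module_hom R (FMod V X) (FMod V Y)"
  by (simp add: is_FI_module_def)

lemma FI_module_id: "is_FI_module R V \<Longrightarrow> finite X \<Longrightarrow> v \<in> carrier (FMod V X) \<Longrightarrow>
    FAct V X X (restrict id X) v = v"
  by (simp add: is_FI_module_def)

lemma FI_module_compose:
  assumes "is_FI_module R V" "finite X" "finite Y" "finite Z" "f \<in> FIm X Y" "g \<in> FIm Y Z"
    "v \<in> carrier (FMod V X)"
  shows "FAct V X Z (compose X g f) v = FAct V Y Z g (FAct V X Y f v)"
  using assms unfolding is_FI_module_def by (elim conjE) simp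

lemma FI_module_closed:
  "is_FI_module R V \<Longrightarrow> finite X \<Longrightarrow> finite Y \<Longrightarrow> f \<in> FIm X Y \<Longrightarrow> v \<in> carrier (FMod V X) \<Longrightarrow>
   FAct V X Y f v \<in> carrier (FMod V Y)"
  by (rule module_hom_closed[OF FI_module_hom])

lemma FIHomE_module_hom:
  "\<phi> \<in> FIHomE R M V \<Longrightarrow> finite Z \<Longrightarrow> \<phi> Z \<in> module_hom R (FMod M Z) (FMod V Z)"
  and FIHomE_natural: "\<phi> \<in> FIHomE R M V \<Longrightarrow> finite Z \<Longrightarrow> finite W \<Longrightarrow> g \<in> FIm Z W \<Longrightarrow>
    c \<in> carrier (FMod M Z) \<Longrightarrow> \<phi> W (FAct M Z W g c) = FAct V Z W g (\<phi> Z c)"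
  and FIHomE_undefined: "\<phi> \<in> FIHomE R M V \<Longrightarrow> \<not> finite Z \<Longrightarrow> \<phi> Z = undefined"
  and FIHomE_undefined': "\<phi> \<in> FIHomE R M V \<Longrightarrow> finite Z \<Longrightarrow> c \<notin> carrier (FMod M Z) \<Longrightarrow>
    \<phi> Z c = undefined"
  by (auto simp: FIHomE_def FIHom_def extensional_def)

lemma FIHomE_restrictI:
  assumes hom: "\<And>Z. finite Z \<Longrightarrow> (\<lambda>c\<in>carrier (FMod M Z). F Z c) \<in> module_hom R (FMod M Z) (FMod V Z)"
    and closed: "\<And>Z W g c. finite Z \<Longrightarrow> finite W \<Longrightarrow> g \<in> FIm Z W \<Longrightarrow> c \<in> carrier (FMod M Z) \<Longrightarrow>
      FAct M Z W g c \<in> carrier (FMod M W)"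
    and natural: "\<And>Z W g c. finite Z \<Longrightarrow> finite W \<Longrightarrow> g \<in> FIm Z W \<Longrightarrow> c \<in> carrier (FMod M Z) \<Longrightarrow>
      F W (FAct M Z W g c) = FAct V Z W g (F Z c)"
  shows "(\<lambda>Z\<in>{Z. finite Z}. \<lambda>c\<in>carrier (FMod M Z). F Z c) \<in> FIHomE R M V"
  unfolding FIHomE_def FIHom_def using hom closed natural by auto

context
  fixes R :: "('k, 'm) ring_scheme" and M :: "('k, 'u) module" and N :: "('k, 'v) module"
  assumes M: "module R M" and N: "module R N"
begin

lemma module_hom_pointwise_zero: "(\<lambda>x\<in>carrier M. \<zero>\<^bsub>N\<^esub>) \<in> module_hom R M N"
proof -
  interpret M: module R M by (rule M)
  interpret N: module R N by (rule N)
  show ?thesis by (simp add: module_hom_def)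
qed

lemma module_hom_pointwise_add:
  assumes f: "f \<in> module_hom R M N" and g: "g \<in> module_hom R M N"
  shows "(\<lambda>x\<in>carrier M. f x \<oplus>\<^bsub>N\<^esub> g x) \<in> module_hom R M N"
  unfolding module_hom_def
proof (intro CollectI conjI ballI Pi_I)
  interpret M: module R M by (rule M)
  interpret N: module R N by (rule N)
  note cl = module_hom_closed[OF f] module_hom_closed[OF g]
  fix x assume x: "x \<in> carrier M"
  show "(\<lambda>x\<in>carrier M. f x \<oplus>\<^bsub>N\<^esub> g x) x \<in> carrier N" using x cl by simp
  {
    fix y assume y: "y \<in> carrier M"
    show "(\<lambda>x\<in>carrier M. f x \<oplus>\<^bsub>N\<^esub> g x) (x \<oplus>\<^bsub>M\<^esub> y)
        = (\<lambda>x\<in>carrier M. f x \<oplus>\<^bsub>N\<^esub> g x) x \<oplus>\<^bsub>N\<^esub> (\<lambda>x\<in>carrier M. f x \<oplus>\<^bsub>N\<^esub> g x) y"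
      using x y cl by (simp add: module_hom_add[OF f] module_hom_add[OF g] N.a_ac)
  next
    fix a assume a: "a \<in> carrier R"
    show "(\<lambda>x\<in>carrier M. f x \<oplus>\<^bsub>N\<^esub> g x) (a \<odot>\<^bsub>M\<^esub> x) = a \<odot>\<^bsub>N\<^esub> (\<lambda>x\<in>carrier M. f x \<oplus>\<^bsub>N\<^esub> g x) x"
      using a x cl by (simp add: module_hom_smult[OF f] module_hom_smult[OF g] N.smult_r_distr)
  }
qed

lemma module_hom_pointwise_smult:
  assumes R: "cring R" and a: "a \<in> carrier R" and f: "f \<in> module_hom R M N"
  shows "(\<lambda>x\<in>carrier M. a \<odot>\<^bsub>N\<^esub> f x) \<in> module_hom R M N"
  unfolding module_hom_def
proof (intro CollectI conjI ballI Pi_I)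
  interpret cring R by (rule R)
  interpret M: module R M by (rule M)
  interpret N: module R N by (rule N)
  note cl = module_hom_closed[OF f]
  fix x assume x: "x \<in> carrier M"
  show "(\<lambda>x\<in>carrier M. a \<odot>\<^bsub>N\<^esub> f x) x \<in> carrier N" using a x cl by simp
  {
    fix y assume y: "y \<in> carrier M"
    show "(\<lambda>x\<in>carrier M. a \<odot>\<^bsub>N\<^esub> f x) (x \<oplus>\<^bsub>M\<^esub> y)
        = (\<lambda>x\<in>carrier M. a \<odot>\<^bsub>N\<^esub> f x) x \<oplus>\<^bsub>N\<^esub> (\<lambda>x\<in>carrier M. a \<odot>\<^bsub>N\<^esub> f x) y"
      using a x y cl by (simp add: module_hom_add[OF f] N.smult_r_distr)
  next
    fix b assume b: "b \<in> carrier R"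
    have "a \<odot>\<^bsub>N\<^esub> (b \<odot>\<^bsub>N\<^esub> f x) = b \<odot>\<^bsub>N\<^esub> (a \<odot>\<^bsub>N\<^esub> f x)"
      using a b x cl by (simp add: N.smult_assoc1[symmetric] m_comm)
    then show "(\<lambda>x\<in>carrier M. a \<odot>\<^bsub>N\<^esub> f x) (b \<odot>\<^bsub>M\<^esub> x) = b \<odot>\<^bsub>N\<^esub> (\<lambda>x\<in>carrier M. a \<odot>\<^bsub>N\<^esub> f x) x"
      using b x by (simp add: module_hom_smult[OF f])
  }
qed

end

definition FIHom_module :: "('k, 'm) ring_scheme \<Rightarrow> ('k, 'u) fimod \<Rightarrow> ('k, 'v) fimod
    \<Rightarrow> ('k, nat set \<Rightarrow> 'u \<Rightarrow> 'v) module" where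
  "FIHom_module R M V = mk_module (FIHomE R M V)
     (\<lambda>Z\<in>{Z. finite Z}. \<lambda>c\<in>carrier (FMod M Z). \<zero>\<^bsub>FMod V Z\<^esub>)
     (\<lambda>\<phi> \<psi>. \<lambda>Z\<in>{Z. finite Z}. \<lambda>c\<in>carrier (FMod M Z). \<phi> Z c \<oplus>\<^bsub>FMod V Z\<^esub> \<psi> Z c)
     (\<lambda>a \<phi>. \<lambda>Z\<in>{Z. finite Z}. \<lambda>c\<in>carrier (FMod M Z). a \<odot>\<^bsub>FMod V Z\<^esub> \<phi> Z c)"

lemma Qmod_eq_FIHom_module: "Qmod R V X = FIHom_module R (Shift (Mfree R X)) V"
  by (simp only: Qmod_def FIHom_module_def)

lemma FIHom_module_eq_restrict_carrier:
  "FIHom_module R M V = (PiE_module {Z. finite Z} (\<lambda>Z. PiE_module (carrier (FMod M Z)) (\<lambda>c. FMod V Z)))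
     \<lparr>carrier := FIHomE R M V\<rparr>"
  by (simp add: FIHom_module_def PiE_module_def mk_module_def)

context
  fixes R :: "('k, 'm) ring_scheme" and M :: "('k, 'u) fimod" and V :: "('k, 'v) fimod"
  assumes R: "cring R"
    and M: "\<And>Z. finite Z \<Longrightarrow> module R (FMod M Z)"
    and M_closed: "\<And>Z W g c. finite Z \<Longrightarrow> finite W \<Longrightarrow> g \<in> FIm Z W \<Longrightarrow> c \<in> carrier (FMod M Z) \<Longrightarrow>
      FAct M Z W g c \<in> carrier (FMod M W)"
    and V: "is_FI_module R V"
begin

lemma FIHomE_zero: "\<zero>\<^bsub>FIHom_module R M V\<^esub> \<in> FIHomE R M V"
  unfolding FIHom_module_def mk_module_simps
proof (rule FIHomE_restrictI[OF _ M_closed])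
  fix Z W :: "nat set" and g c
  assume Z: "finite Z" and W: "finite W" and g: "g \<in> FIm Z W"
  show "\<zero>\<^bsub>FMod V W\<^esub> = FAct V Z W g \<zero>\<^bsub>FMod V Z\<^esub>"
    by (rule module_hom_zero[OF FI_module_hom[OF V Z W g] FI_module_module[OF V Z]
          FI_module_module[OF V W], symmetric])
qed (intro module_hom_pointwise_zero M FI_module_module[OF V])

lemma FIHomE_add:
  assumes \<phi>: "\<phi> \<in> FIHomE R M V" and \<psi>: "\<psi> \<in> FIHomE R M V"
  shows "\<phi> \<oplus>\<^bsub>FIHom_module R M V\<^esub> \<psi> \<in> FIHomE R M V"
  unfolding FIHom_module_def mk_module_simps
proof (rule FIHomE_restrictI[OF _ M_closed])
  fix Z W :: "nat set" and g c
  assume Z: "finite Z" and W: "finite W" and g: "g \<in> FIm Z W" and c: "c \<in> carrier (FMod M Z)"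
  show "\<phi> W (FAct M Z W g c) \<oplus>\<^bsub>FMod V W\<^esub> \<psi> W (FAct M Z W g c)
      = FAct V Z W g (\<phi> Z c \<oplus>\<^bsub>FMod V Z\<^esub> \<psi> Z c)"
    using FIHomE_natural[OF \<phi> Z W g c] FIHomE_natural[OF \<psi> Z W g c]
      module_hom_closed[OF FIHomE_module_hom[OF \<phi> Z] c] module_hom_closed[OF FIHomE_module_hom[OF \<psi> Z] c]
    by (simp add: module_hom_add[OF FI_module_hom[OF V Z W g]])
qed (intro module_hom_pointwise_add M FI_module_module[OF V] FIHomE_module_hom[OF \<phi>]
      FIHomE_module_hom[OF \<psi>])

lemma FIHomE_smult:
  assumes a: "a \<in> carrier R" and \<phi>: "\<phi> \<in> FIHomE R M V"
  shows "a \<odot>\<^bsub>FIHom_module R M V\<^esub> \<phi> \<in> FIHomE R M V"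
  unfolding FIHom_module_def mk_module_simps
proof (rule FIHomE_restrictI[OF _ M_closed])
  fix Z W :: "nat set" and g c
  assume Z: "finite Z" and W: "finite W" and g: "g \<in> FIm Z W" and c: "c \<in> carrier (FMod M Z)"
  show "a \<odot>\<^bsub>FMod V W\<^esub> \<phi> W (FAct M Z W g c) = FAct V Z W g (a \<odot>\<^bsub>FMod V Z\<^esub> \<phi> Z c)"
    using FIHomE_natural[OF \<phi> Z W g c] module_hom_closed[OF FIHomE_module_hom[OF \<phi> Z] c]
    by (simp add: module_hom_smult[OF FI_module_hom[OF V Z W g] a])
qed (intro module_hom_pointwise_smult[OF _ _ R a] M FI_module_module[OF V] FIHomE_module_hom[OF \<phi>])

lemma FIHom_module_module: "module R (FIHom_module R M V)"
  unfolding FIHom_module_eq_restrict_carrier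
proof (rule module_restrict_carrier)
  show "module R (PiE_module {Z. finite Z} (\<lambda>Z. PiE_module (carrier (FMod M Z)) (\<lambda>c. FMod V Z)))"
    by (intro PiE_module_module[OF R] FI_module_module[OF V]) auto
  show "FIHomE R M V \<subseteq> carrier (PiE_module {Z. finite Z} (\<lambda>Z. PiE_module (carrier (FMod M Z)) (\<lambda>c. FMod V Z)))"
  proof
    fix \<phi> assume \<phi>: "\<phi> \<in> FIHomE R M V"
    show "\<phi> \<in> carrier (PiE_module {Z. finite Z} (\<lambda>Z. PiE_module (carrier (FMod M Z)) (\<lambda>c. FMod V Z)))"
      using FIHomE_undefined[OF \<phi>] FIHomE_undefined'[OF \<phi>] module_hom_closed[OF FIHomE_module_hom[OF \<phi>]]
      by (auto simp: PiE_module_def PiE_def extensional_def)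
  qed
qed (use FIHomE_zero FIHomE_add FIHomE_smult in \<open>simp_all add: FIHom_module_eq_restrict_carrier\<close>)

end

section \<open>The isomorphism \<open>\<eta> : QV \<rightarrow> Q'V\<close>\<close>

definition eta :: "('k, 'm) ring_scheme \<Rightarrow> nat set \<Rightarrow> (nat set \<Rightarrow> ((nat \<Rightarrow> nat) \<Rightarrow> 'k) \<Rightarrow> 'v)
    \<Rightarrow> 'v \<times> (nat \<Rightarrow> 'v)" where
  "eta R X \<phi> = (\<phi> X (basis_vec R (FIm X (sig X)) (sig_incl X)),
      \<lambda>x\<in>X. \<phi> (X - {x}) (basis_vec R (FIm X (sig (X - {x}))) (sig_at X x)))"

text \<open>The value at the generator \<open>h\<close> of the homomorphism with \<open>\<eta>\<close>-image \<open>(v, w)\<close>, as forced by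
  the factorisations \<open>sigf_unsig_sig_incl\<close> and \<open>sigf_unsig_sig_at\<close>.\<close>
definition generator_value :: "('k, 'v) fimod \<Rightarrow> nat set \<Rightarrow> nat set \<Rightarrow> 'v \<Rightarrow> (nat \<Rightarrow> 'v)
    \<Rightarrow> (nat \<Rightarrow> nat) \<Rightarrow> 'v" where
  "generator_value V X Z v w h = (if 0 \<in> h ` X then
      FAct V (X - {the_inv_into X h 0}) Z (unsig (X - {the_inv_into X h 0}) h) (w (the_inv_into X h 0))
    else FAct V X Z (unsig X h) v)"

definition eta_inv :: "('k, 'm) ring_scheme \<Rightarrow> ('k, 'v) fimod \<Rightarrow> nat set \<Rightarrow> 'v \<times> (nat \<Rightarrow> 'v)
    \<Rightarrow> (nat set \<Rightarrow> ((nat \<Rightarrow> nat) \<Rightarrow> 'k) \<Rightarrow> 'v)" where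
  "eta_inv R V X vw = (\<lambda>Z\<in>{Z. finite Z}. \<lambda>c\<in>carrier (FMod (Shift (Mfree R X)) Z).
      free_lift (FMod V Z) (FIm X (sig Z)) (generator_value V X Z (fst vw) (snd vw)) c)"

lemma generator_value_sig_free:
  "0 \<notin> h ` X \<Longrightarrow> generator_value V X Z v w h = FAct V X Z (unsig X h) v"
  by (simp add: generator_value_def)

lemma generator_value_sig_at:
  assumes h: "h \<in> FIm X (sig Z)" and x0: "x0 \<in> X" "h x0 = 0"
  shows "generator_value V X Z v w h = FAct V (X - {x0}) Z (unsig (X - {x0}) h) (w x0)"
  using FIm_the_inv_into[OF h x0(1)] x0 by (auto simp: generator_value_def)

lemma carrier_Qmod: "carrier (Qmod R V X) = FIHomE R (Shift (Mfree R X)) V"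
  by (simp add: Qmod_def)

lemma carrier_Q'mod:
  "carrier (Q'mod V X) = carrier (FMod V X) \<times> (\<Pi>\<^sub>E x\<in>X. carrier (FMod V (X - {x})))"
  by (simp add: Q'mod_def)

context
  fixes R :: "('k, 'm) ring_scheme" and V :: "('k, 'v) fimod"
  assumes R: "cring R" and V: "is_FI_module R V"
begin

lemma generator_value_closed:
  assumes X: "finite X" and Z: "finite Z" and h: "h \<in> FIm X (sig Z)"
    and vw: "(v, w) \<in> carrier (Q'mod V X)"
  shows "generator_value V X Z v w h \<in> carrier (FMod V Z)"
proof (cases "0 \<in> h ` X")
  case True
  then obtain x0 where x0: "x0 \<in> X" "h x0 = 0" by auto
  show ?thesis unfolding generator_value_sig_at[OF h x0]
    by (rule FI_module_closed[OF V _ Z unsig_FIm[OF h _ FIm_sig_star_unique[OF h x0]]])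
      (use X x0 vw in \<open>auto simp: carrier_Q'mod\<close>)
next
  case False
  show ?thesis unfolding generator_value_sig_free[OF False]
    by (rule FI_module_closed[OF V X Z unsig_FIm[OF h order_refl]])
      (use False vw in \<open>auto simp: carrier_Q'mod image_iff\<close>)
qed

lemma generator_value_natural:
  assumes X: "finite X" and Z: "finite Z" and W: "finite W" and h: "h \<in> FIm X (sig Z)"
    and g: "g \<in> FIm Z W" and vw: "(v, w) \<in> carrier (Q'mod V X)"
  shows "generator_value V X W v w (compose X (sigf Z g) h) = FAct V Z W g (generator_value V X Z v w h)"
proof (cases "0 \<in> h ` X")
  case True
  then obtain x0 where x0: "x0 \<in> X" "h x0 = 0" by auto
  have k0: "compose X (sigf Z g) h x0 = 0" using x0 by (simp add: compose_def sigf_def sig_def)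
  note nz = FIm_sig_star_unique[OF h x0]
  have "unsig (X - {x0}) (compose X (sigf Z g) h) = compose (X - {x0}) g (unsig (X - {x0}) h)"
    by (rule unsig_compose_sigf[OF h _ nz]) auto
  then have "generator_value V X W v w (compose X (sigf Z g) h)
      = FAct V (X - {x0}) W (compose (X - {x0}) g (unsig (X - {x0}) h)) (w x0)"
    using generator_value_sig_at[OF FIm_compose[OF h sigf_FIm[OF g]] x0(1) k0] by simp
  also have "\<dots> = FAct V Z W g (FAct V (X - {x0}) Z (unsig (X - {x0}) h) (w x0))"
    by (rule FI_module_compose[OF V _ Z W unsig_FIm[OF h _ nz] g]) (use X x0 vw in \<open>auto simp: carrier_Q'mod\<close>)
  finally show ?thesis unfolding generator_value_sig_at[OF h x0] .
next
  case False
  then have nz: "\<And>x. x \<in> X \<Longrightarrow> h x \<noteq> 0" by force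
  have "unsig X (compose X (sigf Z g) h) = compose X g (unsig X h)"
    by (rule unsig_compose_sigf[OF h order_refl nz])
  then have "generator_value V X W v w (compose X (sigf Z g) h)
      = FAct V X W (compose X g (unsig X h)) v"
    using generator_value_sig_free[OF sig_star_notin_compose_sigf[OF h False, where g = g]] by simp
  also have "\<dots> = FAct V Z W g (FAct V X Z (unsig X h) v)"
    by (rule FI_module_compose[OF V X Z W unsig_FIm[OF h order_refl nz] g])
      (use vw in \<open>auto simp: carrier_Q'mod\<close>)
  finally show ?thesis unfolding generator_value_sig_free[OF False] .
qed

lemma eta_inv_apply:
  "finite Z \<Longrightarrow> c \<in> carrier (free_mod R (FIm X (sig Z))) \<Longrightarrow>
   eta_inv R V X vw Z c = free_lift (FMod V Z) (FIm X (sig Z)) (generator_value V X Z (fst vw) (snd vw)) c"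
  by (simp add: eta_inv_def del: carrier_free_mod)

lemma eta_inv_basis_vec:
  assumes X: "finite X" and Z: "finite Z" and vw: "vw \<in> carrier (Q'mod V X)"
    and h: "h \<in> FIm X (sig Z)"
  shows "eta_inv R V X vw Z (basis_vec R (FIm X (sig Z)) h) = generator_value V X Z (fst vw) (snd vw) h"
  unfolding eta_inv_apply[OF Z basis_vec_carrier[OF R]]
  using generator_value_closed[OF X Z] vw
  by (intro free_lift_basis_vec[OF R FI_module_module[OF V Z] finite_FIm[OF X finite_sig[OF Z]] _ h])
    (auto simp: carrier_Q'mod)

lemma generator_value_funcset:
  "finite X \<Longrightarrow> finite Z \<Longrightarrow> vw \<in> carrier (Q'mod V X) \<Longrightarrow>
   generator_value V X Z (fst vw) (snd vw) \<in> FIm X (sig Z) \<rightarrow> carrier (FMod V Z)"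
  using generator_value_closed by (auto simp: carrier_Q'mod)

lemma free_lift_generator_value_natural:
  assumes X: "finite X" and Z: "finite Z" and W: "finite W" and g: "g \<in> FIm Z W"
    and vw: "vw \<in> carrier (Q'mod V X)" and c: "c \<in> carrier (free_mod R (FIm X (sig Z)))"
  shows "free_lift (FMod V W) (FIm X (sig W)) (generator_value V X W (fst vw) (snd vw))
           (FAct (Shift (Mfree R X)) Z W g c)
       = FAct V Z W g (free_lift (FMod V Z) (FIm X (sig Z)) (generator_value V X Z (fst vw) (snd vw)) c)"
proof -
  have fin: "finite (FIm X (sig Y))" if "finite Y" for Y by (rule finite_FIm[OF X finite_sig[OF that]])
  note val = generator_value_funcset[OF X _ vw]
  have p: "compose X (sigf Z g) \<in> FIm X (sig Z) \<rightarrow> FIm X (sig W)"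
    using FIm_compose[OF _ sigf_FIm[OF g]] by blast
  have "free_lift (FMod V W) (FIm X (sig W)) (generator_value V X W (fst vw) (snd vw))
          (FAct (Shift (Mfree R X)) Z W g c)
      = free_lift (FMod V W) (FIm X (sig Z))
          (\<lambda>h. generator_value V X W (fst vw) (snd vw) (compose X (sigf Z g) h)) c"
    unfolding FAct_Shift_Mfree
    by (rule free_lift_free_push[OF R FI_module_module[OF V W] fin[OF Z] fin[OF W] p val[OF W] c])
  also have "\<dots> = free_lift (FMod V W) (FIm X (sig Z))
          (\<lambda>h. FAct V Z W g (generator_value V X Z (fst vw) (snd vw) h)) c"
    using c vw val[OF Z] FI_module_closed[OF V Z W g]
    by (intro free_lift_cong[OF R FI_module_module[OF V W]])
      (auto simp: generator_value_natural[OF X Z W _ g])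
  also have "\<dots> = FAct V Z W g (free_lift (FMod V Z) (FIm X (sig Z)) (generator_value V X Z (fst vw) (snd vw)) c)"
    by (rule module_hom_free_lift[OF R FI_module_hom[OF V Z W g] FI_module_module[OF V Z]
          FI_module_module[OF V W] fin[OF Z] val[OF Z] c, symmetric])
  finally show ?thesis .
qed

lemma eta_inv_FIHomE:
  assumes X: "finite X" and vw: "vw \<in> carrier (Q'mod V X)"
  shows "eta_inv R V X vw \<in> FIHomE R (Shift (Mfree R X)) V"
  unfolding eta_inv_def
proof (rule FIHomE_restrictI)
  fix Z :: "nat set" assume Z: "finite Z"
  show "(\<lambda>c\<in>carrier (FMod (Shift (Mfree R X)) Z).
      free_lift (FMod V Z) (FIm X (sig Z)) (generator_value V X Z (fst vw) (snd vw)) c)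
    \<in> module_hom R (FMod (Shift (Mfree R X)) Z) (FMod V Z)"
    using module_hom_restrict[OF free_lift_hom[OF R FI_module_module[OF V Z]
        finite_FIm[OF X finite_sig[OF Z]] generator_value_funcset[OF X Z vw]] free_mod_module[OF R]]
    by simp
next
  fix Z W :: "nat set" and g c
  assume Z: "finite Z" and W: "finite W" and g: "g \<in> FIm Z W"
    and c: "c \<in> carrier (FMod (Shift (Mfree R X)) Z)"
  show "FAct (Shift (Mfree R X)) Z W g c \<in> carrier (FMod (Shift (Mfree R X)) W)"
    using c by (rule Shift_Mfree_closed[OF R])
  show "free_lift (FMod V W) (FIm X (sig W)) (generator_value V X W (fst vw) (snd vw))
        (FAct (Shift (Mfree R X)) Z W g c)
      = FAct V Z W g (free_lift (FMod V Z) (FIm X (sig Z)) (generator_value V X Z (fst vw) (snd vw)) c)"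
    by (rule free_lift_generator_value_natural[OF X Z W g vw]) (use c in simp)
qed

lemma eta_closed:
  assumes X: "finite X" and \<phi>: "\<phi> \<in> carrier (Qmod R V X)"
  shows "eta R X \<phi> \<in> carrier (Q'mod V X)"
proof -
  have \<phi>': "\<phi> \<in> FIHomE R (Shift (Mfree R X)) V" using \<phi> by (simp add: carrier_Qmod)
  have "\<phi> Y (basis_vec R (FIm X (sig Y)) h) \<in> carrier (FMod V Y)" if "finite Y" for Y h
    by (rule module_hom_closed[OF FIHomE_module_hom[OF \<phi>' that]]) (use basis_vec_carrier[OF R] in simp)
  then show ?thesis using X by (simp add: eta_def carrier_Q'mod)
qed

lemma eta_eta_inv:
  assumes X: "finite X" and vw: "vw \<in> carrier (Q'mod V X)"
  shows "eta R X (eta_inv R V X vw) = vw"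
proof -
  obtain v w where vw': "vw = (v, w)" "v \<in> carrier (FMod V X)"
    "w \<in> (\<Pi>\<^sub>E x\<in>X. carrier (FMod V (X - {x})))"
    using vw by (auto simp: carrier_Q'mod)
  have n0: "0 \<notin> sig_incl X ` X" by (auto simp: sig_incl_def)
  have e: "unsig X (sig_incl X) = restrict id X" by (auto simp: unsig_def sig_incl_def)
  have v: "eta_inv R V X vw X (basis_vec R (FIm X (sig X)) (sig_incl X)) = v"
    using eta_inv_basis_vec[OF X X vw sig_incl_FIm] vw'(1)
    by (simp only: generator_value_sig_free[OF n0] e FI_module_id[OF V X vw'(2)] fst_conv snd_conv)
  have w: "eta_inv R V X vw (X - {x}) (basis_vec R (FIm X (sig (X - {x}))) (sig_at X x)) = w x"
    if x: "x \<in> X" for x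
  proof -
    have x0: "sig_at X x x = 0" using x by (simp add: sig_at_def)
    have e: "unsig (X - {x}) (sig_at X x) = restrict id (X - {x})"
      by (auto simp: unsig_def sig_at_def)
    have wx: "w x \<in> carrier (FMod V (X - {x}))" using vw'(3) x by auto
    show ?thesis
      using eta_inv_basis_vec[OF X _ vw sig_at_FIm] vw'(1) X
      by (simp only: generator_value_sig_at[OF sig_at_FIm x x0] e FI_module_id[OF V _ wx]
          fst_conv snd_conv finite_Diff)
  qed
  have "(\<lambda>x\<in>X. eta_inv R V X vw (X - {x}) (basis_vec R (FIm X (sig (X - {x}))) (sig_at X x))) = w"
    using restrict_ext[of X _ w, OF w] PiE_restrict[OF vw'(3)] by simp
  then show ?thesis using v vw'(1) by (simp add: eta_def)
qed

lemma FIHomE_basis_vec: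
  assumes X: "finite X" and Z: "finite Z" and \<phi>: "\<phi> \<in> FIHomE R (Shift (Mfree R X)) V"
    and h: "h \<in> FIm X (sig Z)"
  shows "\<phi> Z (basis_vec R (FIm X (sig Z)) h) = generator_value V X Z (fst (eta R X \<phi>)) (snd (eta R X \<phi>)) h"
proof (cases "0 \<in> h ` X")
  case True
  then obtain x0 where x0: "x0 \<in> X" "h x0 = 0" by auto
  let ?g = "unsig (X - {x0}) h"
  have g: "?g \<in> FIm (X - {x0}) Z" by (rule unsig_FIm[OF h _ FIm_sig_star_unique[OF h x0]]) auto
  have X': "finite (X - {x0})" using X by simp
  have "\<phi> Z (basis_vec R (FIm X (sig Z)) h)
      = \<phi> Z (FAct (Shift (Mfree R X)) (X - {x0}) Z ?g (basis_vec R (FIm X (sig (X - {x0}))) (sig_at X x0)))"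
    using Shift_Mfree_basis_vec[OF R X X' g sig_at_FIm] sigf_unsig_sig_at[OF h x0] by simp
  also have "\<dots> = FAct V (X - {x0}) Z ?g (\<phi> (X - {x0}) (basis_vec R (FIm X (sig (X - {x0}))) (sig_at X x0)))"
    by (rule FIHomE_natural[OF \<phi> X' Z g]) (use basis_vec_carrier[OF R] in simp)
  also have "\<dots> = generator_value V X Z (fst (eta R X \<phi>)) (snd (eta R X \<phi>)) h"
    unfolding generator_value_sig_at[OF h x0] using x0 by (simp add: eta_def)
  finally show ?thesis .
next
  case False
  let ?g = "unsig X h"
  have g: "?g \<in> FIm X Z" by (rule unsig_FIm[OF h order_refl]) (use False in force)
  have "\<phi> Z (basis_vec R (FIm X (sig Z)) h)
      = \<phi> Z (FAct (Shift (Mfree R X)) X Z ?g (basis_vec R (FIm X (sig X)) (sig_incl X)))"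
    using Shift_Mfree_basis_vec[OF R X X g sig_incl_FIm] sigf_unsig_sig_incl[OF h False] by simp
  also have "\<dots> = FAct V X Z ?g (\<phi> X (basis_vec R (FIm X (sig X)) (sig_incl X)))"
    by (rule FIHomE_natural[OF \<phi> X Z g]) (use basis_vec_carrier[OF R] in simp)
  also have "\<dots> = generator_value V X Z (fst (eta R X \<phi>)) (snd (eta R X \<phi>)) h"
    unfolding generator_value_sig_free[OF False] by (simp add: eta_def)
  finally show ?thesis .
qed

lemma eta_inv_eta:
  assumes X: "finite X" and \<phi>: "\<phi> \<in> carrier (Qmod R V X)"
  shows "eta_inv R V X (eta R X \<phi>) = \<phi>"
proof (intro ext)
  have \<phi>': "\<phi> \<in> FIHomE R (Shift (Mfree R X)) V" using \<phi> by (simp add: carrier_Qmod)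
  fix Z c
  show "eta_inv R V X (eta R X \<phi>) Z c = \<phi> Z c"
  proof (cases "finite Z \<and> c \<in> carrier (free_mod R (FIm X (sig Z)))")
    case True
    then have Z: "finite Z" and c: "c \<in> carrier (free_mod R (FIm X (sig Z)))" by auto
    note val = generator_value_funcset[OF X Z eta_closed[OF X \<phi>]]
    have hom: "\<phi> Z \<in> module_hom R (free_mod R (FIm X (sig Z))) (FMod V Z)"
      using FIHomE_module_hom[OF \<phi>' Z] by (simp only: FMod_Shift_Mfree)
    have "\<phi> Z c = free_lift (FMod V Z) (FIm X (sig Z)) (\<lambda>h. \<phi> Z (basis_vec R (FIm X (sig Z)) h)) c"
      by (rule module_hom_free_mod_eq_free_lift[OF R finite_FIm[OF X finite_sig[OF Z]]
          FI_module_module[OF V Z] hom c])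
    also have "\<dots> = free_lift (FMod V Z) (FIm X (sig Z)) (generator_value V X Z (fst (eta R X \<phi>)) (snd (eta R X \<phi>))) c"
      by (rule free_lift_cong[OF R FI_module_module[OF V Z] c val]) (rule FIHomE_basis_vec[OF X Z \<phi>'])
    also have "\<dots> = eta_inv R V X (eta R X \<phi>) Z c"
      by (rule eta_inv_apply[OF Z c, symmetric])
    finally show ?thesis by simp
  next
    case False
    then show ?thesis
      using FIHomE_undefined[OF \<phi>'] FIHomE_undefined'[OF \<phi>'] by (auto simp: eta_inv_def)
  qed
qed

end

section \<open>\<open>Q'V\<close> is an FI-module\<close>

text \<open>The component \<open>(\<partial>f\<^sub>*(v) + f\<^sub>*w)\<^sub>y \<in> V\<^bsub>Y - {y}\<^esub>\<close> of \<open>f\<^sub>*(v, w)\<close>; only one of the two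
  summands is nonzero, according as \<open>y \<in> f(X)\<close> or not.\<close>
definition Q'_coord :: "('k, 'v) fimod \<Rightarrow> nat set \<Rightarrow> nat set \<Rightarrow> (nat \<Rightarrow> nat) \<Rightarrow> 'v \<Rightarrow> (nat \<Rightarrow> 'v)
    \<Rightarrow> nat \<Rightarrow> 'v" where
  "Q'_coord V X Y f v w y = (if y \<in> f ` X then
      FAct V (X - {the_inv_into X f y}) (Y - {y}) (restrict f (X - {the_inv_into X f y})) (w (the_inv_into X f y))
    else FAct V X (Y - {y}) f v)"

lemma FAct_Q': "FAct (Q' V) X Y f (v, w) = (FAct V X Y f v, \<lambda>y\<in>Y. Q'_coord V X Y f v w y)"
  by (simp add: Q'_def Q'_coord_def)

lemma FMod_Q': "FMod (Q' V) X = Q'mod V X"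
  by (simp add: Q'_def)

lemma Q'_coord_image:
  "f \<in> FIm X Y \<Longrightarrow> x \<in> X \<Longrightarrow>
   Q'_coord V X Y f v w (f x) = FAct V (X - {x}) (Y - {f x}) (restrict f (X - {x})) (w x)"
  by (simp add: Q'_coord_def FIm_the_inv_into)

lemma Q'_coord_miss: "y \<notin> f ` X \<Longrightarrow> Q'_coord V X Y f v w y = FAct V X (Y - {y}) f v"
  by (simp add: Q'_coord_def)

lemma Q'mod_eq_pair_module: "Q'mod V X = pair_module (FMod V X) (PiE_module X (\<lambda>x. FMod V (X - {x})))"
  by (simp add: Q'mod_def pair_module_def PiE_module_def)

context
  fixes R :: "('k, 'm) ring_scheme" and V :: "('k, 'v) fimod"
  assumes R: "cring R" and V: "is_FI_module R V"
begin

lemma Q'mod_module: "finite X \<Longrightarrow> module R (Q'mod V X)"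
  unfolding Q'mod_eq_pair_module
  by (intro pair_module_module[OF R] FI_module_module[OF V] PiE_module_module[OF R]) auto

lemma Q'_coord_closed:
  assumes X: "finite X" and Y: "finite Y" and f: "f \<in> FIm X Y" and y: "y \<in> Y"
    and vw: "(v, w) \<in> carrier (Q'mod V X)"
  shows "Q'_coord V X Y f v w y \<in> carrier (FMod V (Y - {y}))"
proof (cases "y \<in> f ` X")
  case True
  then obtain x where x: "x \<in> X" "y = f x" by auto
  show ?thesis unfolding x(2) Q'_coord_image[OF f x(1)]
    by (rule FI_module_closed[OF V _ _ FIm_restrict_Diff[OF f x(1)]]) (use X Y x vw in \<open>auto simp: carrier_Q'mod\<close>)
next
  case False
  show ?thesis unfolding Q'_coord_miss[OF False]
    by (rule FI_module_closed[OF V X _ FIm_Diff_codomain[OF f False]]) (use Y vw in \<open>auto simp: carrier_Q'mod\<close>)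
qed

lemma Q'_coord_add:
  assumes X: "finite X" and Y: "finite Y" and f: "f \<in> FIm X Y" and y: "y \<in> Y"
    and vw: "(v, w) \<in> carrier (Q'mod V X)" and vw': "(v', w') \<in> carrier (Q'mod V X)"
  shows "Q'_coord V X Y f (v \<oplus>\<^bsub>FMod V X\<^esub> v') (\<lambda>x\<in>X. w x \<oplus>\<^bsub>FMod V (X - {x})\<^esub> w' x) y
       = Q'_coord V X Y f v w y \<oplus>\<^bsub>FMod V (Y - {y})\<^esub> Q'_coord V X Y f v' w' y"
proof (cases "y \<in> f ` X")
  case True
  then obtain x where x: "x \<in> X" "y = f x" by auto
  have X': "finite (X - {x})" and Y': "finite (Y - {f x})" using X Y by auto
  have "w x \<in> carrier (FMod V (X - {x}))" "w' x \<in> carrier (FMod V (X - {x}))"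
    using vw vw' x(1) by (auto simp: carrier_Q'mod)
  then show ?thesis unfolding x(2) Q'_coord_image[OF f x(1)] using x(1)
    by (simp add: module_hom_add[OF FI_module_hom[OF V X' Y' FIm_restrict_Diff[OF f x(1)]]])
next
  case False
  show ?thesis unfolding Q'_coord_miss[OF False]
    using vw vw' Y by (simp add: module_hom_add[OF FI_module_hom[OF V X _ FIm_Diff_codomain[OF f False]]] carrier_Q'mod)
qed

lemma Q'_coord_smult:
  assumes X: "finite X" and Y: "finite Y" and f: "f \<in> FIm X Y" and y: "y \<in> Y"
    and a: "a \<in> carrier R" and vw: "(v, w) \<in> carrier (Q'mod V X)"
  shows "Q'_coord V X Y f (a \<odot>\<^bsub>FMod V X\<^esub> v) (\<lambda>x\<in>X. a \<odot>\<^bsub>FMod V (X - {x})\<^esub> w x) y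
       = a \<odot>\<^bsub>FMod V (Y - {y})\<^esub> Q'_coord V X Y f v w y"
proof (cases "y \<in> f ` X")
  case True
  then obtain x where x: "x \<in> X" "y = f x" by auto
  have X': "finite (X - {x})" and Y': "finite (Y - {f x})" using X Y by auto
  have "w x \<in> carrier (FMod V (X - {x}))" using vw x(1) by (auto simp: carrier_Q'mod)
  then show ?thesis unfolding x(2) Q'_coord_image[OF f x(1)] using x(1)
    by (simp add: module_hom_smult[OF FI_module_hom[OF V X' Y' FIm_restrict_Diff[OF f x(1)]] a])
next
  case False
  show ?thesis unfolding Q'_coord_miss[OF False]
    using vw Y by (simp add: module_hom_smult[OF FI_module_hom[OF V X _ FIm_Diff_codomain[OF f False]] a] carrier_Q'mod)
qed

lemma Q'_act_hom:
  assumes X: "finite X" and Y: "finite Y" and f: "f \<in> FIm X Y"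
  shows "FAct (Q' V) X Y f \<in> module_hom R (Q'mod V X) (Q'mod V Y)"
  unfolding module_hom_def
proof (intro CollectI conjI ballI Pi_I)
  fix vw assume "vw \<in> carrier (Q'mod V X)"
  then obtain v w where vw: "vw = (v, w)" "(v, w) \<in> carrier (Q'mod V X)" by (cases vw) auto
  then show "FAct (Q' V) X Y f vw \<in> carrier (Q'mod V Y)"
    using FI_module_closed[OF V X Y f] Q'_coord_closed[OF X Y f _ vw(2)]
    by (auto simp: FAct_Q' carrier_Q'mod)
  {
    fix vw' assume "vw' \<in> carrier (Q'mod V X)"
    then obtain v' w' where vw': "vw' = (v', w')" "(v', w') \<in> carrier (Q'mod V X)" by (cases vw') auto
    show "FAct (Q' V) X Y f (vw \<oplus>\<^bsub>Q'mod V X\<^esub> vw') = FAct (Q' V) X Y f vw \<oplus>\<^bsub>Q'mod V Y\<^esub> FAct (Q' V) X Y f vw'"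
      using vw vw' Q'_coord_add[OF X Y f _ vw(2) vw'(2)]
      by (simp add: FAct_Q' Q'mod_def module_hom_add[OF FI_module_hom[OF V X Y f]] carrier_Q'mod
          cong: restrict_cong)
  next
    fix a assume a: "a \<in> carrier R"
    show "FAct (Q' V) X Y f (a \<odot>\<^bsub>Q'mod V X\<^esub> vw) = a \<odot>\<^bsub>Q'mod V Y\<^esub> FAct (Q' V) X Y f vw"
      using vw Q'_coord_smult[OF X Y f _ a vw(2)]
      by (simp add: FAct_Q' Q'mod_def module_hom_smult[OF FI_module_hom[OF V X Y f] a] carrier_Q'mod
          cong: restrict_cong)
  }
qed

lemma Q'_act_id:
  assumes X: "finite X" and vw: "vw \<in> carrier (Q'mod V X)"
  shows "FAct (Q' V) X X (restrict id X) vw = vw"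
proof -
  obtain v w where vw': "vw = (v, w)" "v \<in> carrier (FMod V X)"
    "w \<in> (\<Pi>\<^sub>E x\<in>X. carrier (FMod V (X - {x})))"
    using vw by (auto simp: carrier_Q'mod)
  have "Q'_coord V X X (restrict id X) v w x = w x" if x: "x \<in> X" for x
  proof -
    have "restrict (restrict id X) (X - {x}) = restrict id (X - {x})" by (auto simp: fun_eq_iff)
    then show ?thesis
      using Q'_coord_image[OF FIm_id x, of V v w] x X FI_module_id[OF V _ PiE_mem[OF vw'(3) x]] by simp
  qed
  then have "(\<lambda>x\<in>X. Q'_coord V X X (restrict id X) v w x) = w"
    using restrict_ext[of X _ w] PiE_restrict[OF vw'(3)] by simp
  then show ?thesis unfolding vw'(1) FAct_Q' using FI_module_id[OF V X vw'(2)] by simp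
qed

lemma Q'_coord_compose_image:
  assumes X: "finite X" and Y: "finite Y" and Z: "finite Z" and f: "f \<in> FIm X Y" and g: "g \<in> FIm Y Z"
    and vw: "(v, w) \<in> carrier (Q'mod V X)" and y: "y \<in> Y"
  shows "Q'_coord V X Z (compose X g f) v w (g y)
       = FAct V (Y - {y}) (Z - {g y}) (restrict g (Y - {y})) (Q'_coord V X Y f v w y)"
proof -
  have Y': "finite (Y - {y})" and Z': "finite (Z - {g y})" using Y Z by auto
  have rg: "restrict g (Y - {y}) \<in> FIm (Y - {y}) (Z - {g y})" by (rule FIm_restrict_Diff[OF g y])
  show ?thesis
  proof (cases "y \<in> f ` X")
    case True
    then obtain x where x: "x \<in> X" "y = f x" by auto
    have wx: "w x \<in> carrier (FMod V (X - {x}))" using vw x(1) by (auto simp: carrier_Q'mod)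
    have "Q'_coord V X Z (compose X g f) v w (g y)
        = FAct V (X - {x}) (Z - {g y}) (restrict (compose X g f) (X - {x})) (w x)"
      using Q'_coord_image[OF FIm_compose[OF f g] x(1), of V v w] x by (simp add: compose_def)
    also have "\<dots> = FAct V (Y - {y}) (Z - {g y}) (restrict g (Y - {y}))
        (FAct V (X - {x}) (Y - {y}) (restrict f (X - {x})) (w x))"
      unfolding x(2) compose_restrict_Diff[OF f x(1), symmetric] using X x(2) Y' Z' rg wx
      by (intro FI_module_compose[OF V _ _ _ FIm_restrict_Diff[OF f x(1)]]) auto
    also have "\<dots> = FAct V (Y - {y}) (Z - {g y}) (restrict g (Y - {y})) (Q'_coord V X Y f v w y)"
      using Q'_coord_image[OF f x(1), of V v w] x(2) by simp
    finally show ?thesis .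
  next
    case False
    have v: "v \<in> carrier (FMod V X)" using vw by (simp add: carrier_Q'mod)
    have "g y \<notin> compose X g f ` X"
      using False y FImD[OF f] inj_onD[OF FIm_inj[OF g]] by (force simp: compose_def)
    then have "Q'_coord V X Z (compose X g f) v w (g y) = FAct V X (Z - {g y}) (compose X g f) v"
      by (rule Q'_coord_miss)
    also have "\<dots> = FAct V (Y - {y}) (Z - {g y}) (restrict g (Y - {y})) (FAct V X (Y - {y}) f v)"
      unfolding compose_restrict_miss[OF f False, of g, symmetric]
      by (rule FI_module_compose[OF V X Y' Z' FIm_Diff_codomain[OF f False] rg v])
    finally show ?thesis by (simp add: Q'_coord_miss[OF False])
  qed
qed

lemma Q'_coord_compose:
  assumes X: "finite X" and Y: "finite Y" and Z: "finite Z" and f: "f \<in> FIm X Y" and g: "g \<in> FIm Y Z"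
    and vw: "(v, w) \<in> carrier (Q'mod V X)"
  shows "Q'_coord V X Z (compose X g f) v w z
       = Q'_coord V Y Z g (FAct V X Y f v) (\<lambda>y\<in>Y. Q'_coord V X Y f v w y) z"
proof (cases "z \<in> g ` Y")
  case True
  then obtain y where y: "y \<in> Y" "z = g y" by auto
  show ?thesis
    unfolding y(2) Q'_coord_image[OF g y(1)] Q'_coord_compose_image[OF X Y Z f g vw y(1)]
    using y(1) by simp
next
  case False
  have v: "v \<in> carrier (FMod V X)" using vw by (simp add: carrier_Q'mod)
  have gf: "z \<notin> compose X g f ` X" using False FImD[OF f] by (auto simp: compose_def)
  show ?thesis
    unfolding Q'_coord_miss[OF False] Q'_coord_miss[OF gf]
    by (rule FI_module_compose[OF V X Y _ f FIm_Diff_codomain[OF g False] v]) (use Z in simp)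
qed

lemma Q'_act_compose:
  assumes X: "finite X" and Y: "finite Y" and Z: "finite Z" and f: "f \<in> FIm X Y" and g: "g \<in> FIm Y Z"
    and vw: "vw \<in> carrier (Q'mod V X)"
  shows "FAct (Q' V) X Z (compose X g f) vw = FAct (Q' V) Y Z g (FAct (Q' V) X Y f vw)"
proof -
  obtain v w where vw': "vw = (v, w)" "(v, w) \<in> carrier (Q'mod V X)" using vw by (cases vw) auto
  then have "v \<in> carrier (FMod V X)" by (simp add: carrier_Q'mod)
  then show ?thesis
    unfolding vw'(1) FAct_Q'
    using Q'_coord_compose[OF X Y Z f g vw'(2)] FI_module_compose[OF V X Y Z f g]
    by (simp cong: restrict_cong)
qed

lemma Q'_is_FI_module: "is_FI_module R (Q' V)"
  unfolding is_FI_module_def FMod_Q'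
  by (intro conjI allI impI ballI Q'mod_module Q'_act_hom Q'_act_id Q'_act_compose)

end

section \<open>\<open>QV\<close> is an FI-module isomorphic to \<open>Q'V\<close>\<close>

lemma FMod_Q: "FMod (Q R V) X = Qmod R V X"
  by (simp add: Q_def)

lemma FAct_Q:
  "FAct (Q R V) X Y f \<phi> = (\<lambda>Z\<in>{Z. finite Z}. \<lambda>c\<in>carrier (FMod (Shift (Mfree R Y)) Z).
      \<phi> Z (rho R X Y f (sig Z) c))"
  by (simp only: Q_def fimod.select_convs)

lemma Qmod_ops:
  "add (Qmod R V X) = (\<lambda>\<phi> \<psi>. \<lambda>Z\<in>{Z. finite Z}. \<lambda>c\<in>carrier (FMod (Shift (Mfree R X)) Z).
     \<phi> Z c \<oplus>\<^bsub>FMod V Z\<^esub> \<psi> Z c)"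
  "smult (Qmod R V X) = (\<lambda>a \<phi>. \<lambda>Z\<in>{Z. finite Z}. \<lambda>c\<in>carrier (FMod (Shift (Mfree R X)) Z).
     a \<odot>\<^bsub>FMod V Z\<^esub> \<phi> Z c)"
  by (simp_all only: Qmod_def mk_module_simps)

context
  fixes R :: "('k, 'm) ring_scheme" and V :: "('k, 'v) fimod"
  assumes R: "cring R" and V: "is_FI_module R V"
begin

lemma Qmod_module: "module R (Qmod R V X)"
  unfolding Qmod_eq_FIHom_module
  by (rule FIHom_module_module[OF R _ Shift_Mfree_closed[OF R] V]) (simp add: free_mod_module[OF R])

lemma Q_act_closed:
  assumes X: "finite X" and Y: "finite Y" and f: "f \<in> FIm X Y" and \<phi>: "\<phi> \<in> carrier (Qmod R V X)"
  shows "FAct (Q R V) X Y f \<phi> \<in> carrier (Qmod R V Y)"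
  unfolding FAct_Q carrier_Qmod
proof (rule FIHomE_restrictI)
  have \<phi>': "\<phi> \<in> FIHomE R (Shift (Mfree R X)) V" using \<phi> by (simp add: carrier_Qmod)
  fix Z :: "nat set" assume Z: "finite Z"
  show "(\<lambda>c\<in>carrier (FMod (Shift (Mfree R Y)) Z). \<phi> Z (rho R X Y f (sig Z) c))
      \<in> module_hom R (FMod (Shift (Mfree R Y)) Z) (FMod V Z)"
    using module_hom_compose[OF rho_hom[OF R Y finite_sig[OF Z]]
        FIHomE_module_hom[OF \<phi>' Z, unfolded FMod_Shift_Mfree] free_mod_module[OF R]] by simp
  fix W g c assume W: "finite W" and g: "g \<in> FIm Z W"
    and c: "c \<in> carrier (FMod (Shift (Mfree R Y)) Z)"
  show "FAct (Shift (Mfree R Y)) Z W g c \<in> carrier (FMod (Shift (Mfree R Y)) W)"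
    using c by (rule Shift_Mfree_closed[OF R])
  show "\<phi> W (rho R X Y f (sig W) (FAct (Shift (Mfree R Y)) Z W g c))
      = FAct V Z W g (\<phi> Z (rho R X Y f (sig Z) c))"
    using c rho_natural[OF R X Y Z W f g] rho_closed[OF R]
    by (simp add: FIHomE_natural[OF \<phi>' Z W g])
qed

lemma Q_act_hom:
  assumes X: "finite X" and Y: "finite Y" and f: "f \<in> FIm X Y"
  shows "FAct (Q R V) X Y f \<in> module_hom R (Qmod R V X) (Qmod R V Y)"
  unfolding module_hom_def
proof (intro CollectI conjI ballI Pi_I)
  fix \<phi> assume "\<phi> \<in> carrier (Qmod R V X)"
  then show "FAct (Q R V) X Y f \<phi> \<in> carrier (Qmod R V Y)" by (rule Q_act_closed[OF X Y f])
  show "FAct (Q R V) X Y f (\<phi> \<oplus>\<^bsub>Qmod R V X\<^esub> \<psi>) = FAct (Q R V) X Y f \<phi> \<oplus>\<^bsub>Qmod R V Y\<^esub> FAct (Q R V) X Y f \<psi>"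
    for \<psi> unfolding FAct_Q Qmod_ops by (intro ext) (simp add: rho_closed[OF R] del: carrier_free_mod)
  show "FAct (Q R V) X Y f (a \<odot>\<^bsub>Qmod R V X\<^esub> \<phi>) = a \<odot>\<^bsub>Qmod R V Y\<^esub> FAct (Q R V) X Y f \<phi>"
    for a unfolding FAct_Q Qmod_ops by (intro ext) (simp add: rho_closed[OF R] del: carrier_free_mod)
qed

lemma eta_hom:
  assumes X: "finite X"
  shows "eta R X \<in> module_hom R (Qmod R V X) (Q'mod V X)"
  unfolding module_hom_def
proof (intro CollectI conjI ballI Pi_I)
  fix \<phi> assume "\<phi> \<in> carrier (Qmod R V X)"
  then show "eta R X \<phi> \<in> carrier (Q'mod V X)" by (rule eta_closed[OF R V X])
  show "eta R X (\<phi> \<oplus>\<^bsub>Qmod R V X\<^esub> \<psi>) = eta R X \<phi> \<oplus>\<^bsub>Q'mod V X\<^esub> eta R X \<psi>" for \<psi>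
    using X by (simp add: eta_def Qmod_ops Q'mod_def basis_vec_PiE[OF R] cong: restrict_cong)
  show "eta R X (a \<odot>\<^bsub>Qmod R V X\<^esub> \<phi>) = a \<odot>\<^bsub>Q'mod V X\<^esub> eta R X \<phi>" for a
    using X by (simp add: eta_def Qmod_ops Q'mod_def basis_vec_PiE[OF R] cong: restrict_cong)
qed

lemma eta_natural:
  assumes X: "finite X" and Y: "finite Y" and f: "f \<in> FIm X Y" and \<phi>: "\<phi> \<in> carrier (Qmod R V X)"
  shows "eta R Y (FAct (Q R V) X Y f \<phi>) = FAct (Q' V) X Y f (eta R X \<phi>)"
proof -
  have \<phi>': "\<phi> \<in> FIHomE R (Shift (Mfree R X)) V" using \<phi> by (simp add: carrier_Qmod)
  have pull: "FAct (Q R V) X Y f \<phi> Z (basis_vec R (FIm Y (sig Z)) k)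
      = \<phi> Z (basis_vec R (FIm X (sig Z)) (compose X k f))"
    if Z: "finite Z" and k: "k \<in> FIm Y (sig Z)" for Z k
    using Z basis_vec_carrier[OF R, of "FIm Y (sig Z)" k] rho_basis_vec[OF R Y finite_sig[OF Z] f k]
    by (simp add: FAct_Q)
  have push: "FAct V X' Z g (\<phi> X' (basis_vec R (FIm X (sig X')) h))
      = \<phi> Z (basis_vec R (FIm X (sig Z)) (compose X (sigf X' g) h))"
    if X': "finite X'" and Z: "finite Z" and g: "g \<in> FIm X' Z" and h: "h \<in> FIm X (sig X')" for X' Z g h
    using FIHomE_natural[OF \<phi>' X' Z g, of "basis_vec R (FIm X (sig X')) h"]
      Shift_Mfree_basis_vec[OF R X X' g h] by (simp add: basis_vec_PiE[OF R])
  have coord: "FAct (Q R V) X Y f \<phi> (Y - {y}) (basis_vec R (FIm Y (sig (Y - {y}))) (sig_at Y y))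
      = Q'_coord V X Y f (fst (eta R X \<phi>)) (snd (eta R X \<phi>)) y" if y: "y \<in> Y" for y
  proof (cases "y \<in> f ` X")
    case True
    then obtain x where x: "x \<in> X" "y = f x" by auto
    have Y': "finite (Y - {f x})" using Y by simp
    show ?thesis
      unfolding x(2) pull[OF Y' sig_at_FIm] sig_at_compose_image[OF f x(1)] Q'_coord_image[OF f x(1)]
      using push[OF _ _ FIm_restrict_Diff[OF f x(1)] sig_at_FIm] X Y x(1) by (simp add: eta_def)
  next
    case False
    have Y': "finite (Y - {y})" using Y by simp
    show ?thesis
      unfolding pull[OF Y' sig_at_FIm] sig_at_compose_miss[OF f False] Q'_coord_miss[OF False]
      using push[OF X _ FIm_Diff_codomain[OF f False] sig_incl_FIm] Y by (simp add: eta_def)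
  qed
  show ?thesis
    unfolding eta_def[of R Y] FAct_Q'[where v = "fst (eta R X \<phi>)", of V X Y f "snd (eta R X \<phi>)", simplified]
    using pull[OF Y sig_incl_FIm] push[OF X Y f sig_incl_FIm] coord
    by (simp add: sig_incl_compose[OF f] eta_def cong: restrict_cong)
qed

lemma eta_inj:
  assumes X: "finite X" and \<phi>: "\<phi> \<in> carrier (Qmod R V X)" and \<psi>: "\<psi> \<in> carrier (Qmod R V X)"
    and eq: "eta R X \<phi> = eta R X \<psi>"
  shows "\<phi> = \<psi>"
  using eta_inv_eta[OF R V X \<phi>] eta_inv_eta[OF R V X \<psi>] eq by metis

lemma Q_is_FI_module: "is_FI_module R (Q R V)"
  unfolding is_FI_module_def FMod_Q
proof (intro conjI allI impI ballI Qmod_module Q_act_hom)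
  fix X :: "nat set" and \<phi> assume X: "finite X" and \<phi>: "\<phi> \<in> carrier (Qmod R V X)"
  show "FAct (Q R V) X X (restrict id X) \<phi> = \<phi>"
    by (rule eta_inj[OF X Q_act_closed[OF X X FIm_id \<phi>] \<phi>])
      (simp add: eta_natural[OF X X FIm_id \<phi>] Q'_act_id[OF R V X eta_closed[OF R V X \<phi>]])
next
  fix X Y Z :: "nat set" and f g \<phi>
  assume X: "finite X" and Y: "finite Y" and Z: "finite Z" and f: "f \<in> FIm X Y" and g: "g \<in> FIm Y Z"
    and \<phi>: "\<phi> \<in> carrier (Qmod R V X)"
  have gf: "compose X g f \<in> FIm X Z" by (rule FIm_compose[OF f g])
  have f\<phi>: "FAct (Q R V) X Y f \<phi> \<in> carrier (Qmod R V Y)" by (rule Q_act_closed[OF X Y f \<phi>])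
  show "FAct (Q R V) X Z (compose X g f) \<phi> = FAct (Q R V) Y Z g (FAct (Q R V) X Y f \<phi>)"
    by (rule eta_inj[OF Z Q_act_closed[OF X Z gf \<phi>] Q_act_closed[OF Y Z g f\<phi>]])
      (simp add: eta_natural[OF X Z gf \<phi>] eta_natural[OF Y Z g f\<phi>] eta_natural[OF X Y f \<phi>]
        Q'_act_compose[OF R V X Y Z f g eta_closed[OF R V X \<phi>]])
qed

lemma eta_FIIso: "FIIso R (Q R V) (Q' V) (eta R)"
  unfolding FIIso_def FIHom_def FMod_Q FMod_Q'
proof (intro conjI allI impI CollectI ballI eta_hom eta_natural)
  fix X :: "nat set" assume X: "finite X"
  show "bij_betw (eta R X) (carrier (Qmod R V X)) (carrier (Q'mod V X))"
  proof (rule bij_betw_byWitness[where f' = "eta_inv R V X"])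
    show "\<forall>\<phi>\<in>carrier (Qmod R V X). eta_inv R V X (eta R X \<phi>) = \<phi>"
      using eta_inv_eta[OF R V X] by blast
    show "\<forall>vw\<in>carrier (Q'mod V X). eta R X (eta_inv R V X vw) = vw"
      using eta_eta_inv[OF R V X] by blast
    show "eta R X ` carrier (Qmod R V X) \<subseteq> carrier (Q'mod V X)"
      using eta_closed[OF R V X] by blast
    show "eta_inv R V X ` carrier (Q'mod V X) \<subseteq> carrier (Qmod R V X)"
      using eta_inv_FIHomE[OF R V X] by (auto simp: carrier_Qmod)
  qed
qed

end

theorem mainTheorem3:
  fixes R :: "('k, 'm) ring_scheme"
  assumes "cring R"
  shows "\<exists>\<eta> :: ('k, 'v) fimod \<Rightarrow> nat set \<Rightarrow> (nat set \<Rightarrow> ((nat \<Rightarrow> nat) \<Rightarrow> 'k) \<Rightarrow> 'v)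
                 \<Rightarrow> 'v \<times> (nat \<Rightarrow> 'v).
     (\<forall>V. is_FI_module R V \<longrightarrow>
        is_FI_module R (Q R V) \<and> is_FI_module R (Q' V) \<and> FIIso R (Q R V) (Q' V) (\<eta> V))
   \<and> (\<forall>V W \<alpha>. is_FI_module R V \<longrightarrow> is_FI_module R W \<longrightarrow> \<alpha> \<in> FIHom R V W \<longrightarrow>
        (\<forall>X. finite X \<longrightarrow> (\<forall>\<phi>\<in>carrier (FMod (Q R V) X).
           \<eta> W X (Qmap R \<alpha> X \<phi>) = Q'map \<alpha> X (\<eta> V X \<phi>))))"
proof (rule exI[of _ "\<lambda>V. eta R"], intro conjI allI impI ballI)
  fix V :: "('k, 'v) fimod" assume V: "is_FI_module R V"
  show "is_FI_module R (Q R V)" by (rule Q_is_FI_module[OF assms V])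
  show "is_FI_module R (Q' V)" by (rule Q'_is_FI_module[OF assms V])
  show "FIIso R (Q R V) (Q' V) (eta R)" by (rule eta_FIIso[OF assms V])
next
  fix V W :: "('k, 'v) fimod" and \<alpha> :: "nat set \<Rightarrow> 'v \<Rightarrow> 'v" and X :: "nat set"
    and \<phi> :: "nat set \<Rightarrow> ((nat \<Rightarrow> nat) \<Rightarrow> 'k) \<Rightarrow> 'v"
  assume "finite X"
  then show "eta R X (Qmap R \<alpha> X \<phi>) = Q'map \<alpha> X (eta R X \<phi>)"
    by (simp add: eta_def Qmap_def Q'map_def basis_vec_PiE[OF assms] cong: restrict_cong)
qed
end
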